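(* For every $n\in\mathbb N$ there is a deterministic online monotone embedding (which may depend on $n$) of up to $n$ points from any metric space into HSTs with distortion $n-1$, and this is tight: no deterministic online monotone embedding of up to $n$ points from all metric spaces into HSTs achieves distortion less than $n-1$. Without prior knowledge of $n$ (i.e., a single embedding used for all $n$), the optimal achievable distortion for sequences of $n$ points is $n\cdot\tilde\Theta(\log n)$, where $\tilde\Theta$ hides factors polylogarithmic in $\log n$; this bound is also tight.
   Context: For $\mu \ge 1$, a $\mu$-HST is a metric space whose points are the leaves of a rooted tree $T$; every node $v$ has a weight $\varphi(v)\ge 0$, with $\varphi(v)=0$ iff $v$ is a leaf, and $\varphi(v)\le\varphi(u)/\mu$ whenever $v$ is a child of $u$; the distance between leaves $u,v$ is $\varphi(\mathrm{lca}(u,v))$. "HSTs" denotes the family of such metrics. An update sequence on $(X,d_X)$ is a sequence of pairs $(v_t,o_t)\in X\times\{+,-\}$ ($v_t$ arrives if $o_t=+$, leaves if $o_t=-$), with alive sets $L_0=\varnothing$, $L_t=L_{t-1}\cup\{v_t\}$ or $L_{t-1}\setminus\{v_t\}$ accordingly. A deterministic online monotone embedding into a family $\mathcal M$ receives $\sigma_1,\sigma_2,\dots$ one at a time and after $\sigma_t$ (depending only on $\sigma_1,\dots,\sigma_t$) outputs a metric $d_t$ on $L_t$ with: $(L_t,d_t)\in\mathcal M$; $d_t(u,v)\ge d_X(u,v)$ for all $u,v\in L_t$ (non-contractive); $d_t(u,v)\le d_{t-1}(u,v)$ for all $u,v\in L_{t-1}\cap L_t$. It has distortion $\lambda$ if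 $d_t(u,v)\le\lambda d_X(u,v)$ for all sequences in the considered class, all $t$, and all $u,v\in L_t$. "Up to $n$ points" refers to sequences in which at most $n$ points arrive. *)

theory Defs
  imports Complex_Main
begin

definition is_metric :: "('a \<Rightarrow> 'a \<Rightarrow> real) \<Rightarrow> bool" where
  "is_metric d \<longleftrightarrow>
     (\<forall>x y. d x y = 0 \<longleftrightarrow> x = y) \<and> (\<forall>x y. d x y = d y x) \<and>
     (\<forall>x y z. d x z \<le> d x y + d y z)"

text \<open>A finite rooted tree: node set N (of naturals), root r, parent map p
  (only meaningful on non-root nodes); every node reaches the root.\<close>

definition is_rooted_tree :: "nat set \<Rightarrow> nat \<Rightarrow> (nat \<Rightarrow> nat) \<Rightarrow> bool" where
  "is_rooted_tree N r p \<longleftrightarrow> finite N \<and> r \<in> N \<and>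
     (\<forall>v\<in>N. v \<noteq> r \<longrightarrow> p v \<in> N) \<and> (\<forall>v\<in>N. \<exists>k. (p ^^ k) v = r)"

text \<open>u is an ancestor of v (reflexive); the walk towards the root stops at r.\<close>
definition tree_anc :: "nat \<Rightarrow> (nat \<Rightarrow> nat) \<Rightarrow> nat \<Rightarrow> nat \<Rightarrow> bool" where
  "tree_anc r p u v \<longleftrightarrow> (\<exists>k. (p ^^ k) v = u \<and> (\<forall>j<k. (p ^^ j) v \<noteq> r))"

definition tree_leaf :: "nat set \<Rightarrow> nat \<Rightarrow> (nat \<Rightarrow> nat) \<Rightarrow> nat \<Rightarrow> bool" where
  "tree_leaf N r p v \<longleftrightarrow> v \<in> N \<and> \<not> (\<exists>w\<in>N. w \<noteq> r \<and> p w = v)"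

definition tree_lca :: "nat \<Rightarrow> (nat \<Rightarrow> nat) \<Rightarrow> nat \<Rightarrow> nat \<Rightarrow> nat" where
  "tree_lca r p u v = (THE w. tree_anc r p w u \<and> tree_anc r p w v \<and>
       (\<forall>w'. tree_anc r p w' u \<and> tree_anc r p w' v \<longrightarrow> tree_anc r p w' w))"

text \<open>(L, rho) is a mu-HST. The empty metric space is counted as an HST.\<close>
definition is_muHST :: "real \<Rightarrow> 'a set \<Rightarrow> ('a \<Rightarrow> 'a \<Rightarrow> real) \<Rightarrow> bool" where
  "is_muHST \<mu> L \<rho> \<longleftrightarrow> L = {} \<or>
     (\<exists>N r p \<phi> lf. is_rooted_tree N r p \<and>
        bij_betw lf L {v. tree_leaf N r p v} \<and>
        (\<forall>v\<in>N. \<phi> v \<ge> 0) \<and>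
        (\<forall>v\<in>N. \<phi> v = 0 \<longleftrightarrow> tree_leaf N r p v) \<and>
        (\<forall>v\<in>N. v \<noteq> r \<longrightarrow> \<phi> v \<le> \<phi> (p v) / \<mu>) \<and>
        (\<forall>x\<in>L. \<forall>y\<in>L. \<rho> x y = \<phi> (tree_lca r p (lf x) (lf y))))"

definition in_HSTs :: "'a set \<Rightarrow> ('a \<Rightarrow> 'a \<Rightarrow> real) \<Rightarrow> bool" where
  "in_HSTs L \<rho> \<longleftrightarrow> (\<exists>\<mu>\<ge>1. is_muHST \<mu> L \<rho>)"

text \<open>An update is a pair (v, o); o = True means arrival (+), False departure (-).\<close>
definition alive :: "('a \<times> bool) list \<Rightarrow> 'a set" where
  "alive \<sigma> = fold (\<lambda>(v, arr) L. if arr then insert v L else L - {v}) \<sigma> {}"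

definition upto :: "nat \<Rightarrow> ('a \<times> bool) list set" where
  "upto n = {\<sigma>. length (filter snd \<sigma>) \<le> n}"

text \<open>A deterministic online embedding E maps the prefix sigma_1..sigma_t to the
  metric d_t (relevant on alive points).\<close>
definition online_monotone_embedding ::
  "('a \<Rightarrow> 'a \<Rightarrow> real) \<Rightarrow> ('a \<times> bool) list set \<Rightarrow>
   (('a \<times> bool) list \<Rightarrow> 'a \<Rightarrow> 'a \<Rightarrow> real) \<Rightarrow> bool" where
  "online_monotone_embedding d S E \<longleftrightarrow>
     (\<forall>\<sigma>\<in>S. \<sigma> \<noteq> [] \<longrightarrow>
        in_HSTs (alive \<sigma>) (E \<sigma>) \<and>
        (\<forall>u\<in>alive \<sigma>. \<forall>v\<in>alive \<sigma>. d u v \<le> E \<sigma> u v) \<and>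
        (\<forall>u\<in>alive \<sigma> \<inter> alive (butlast \<sigma>). \<forall>v\<in>alive \<sigma> \<inter> alive (butlast \<sigma>).
            E \<sigma> u v \<le> E (butlast \<sigma>) u v))"

definition has_distortion ::
  "('a \<Rightarrow> 'a \<Rightarrow> real) \<Rightarrow> ('a \<times> bool) list set \<Rightarrow>
   (('a \<times> bool) list \<Rightarrow> 'a \<Rightarrow> 'a \<Rightarrow> real) \<Rightarrow> real \<Rightarrow> bool" where
  "has_distortion d S E lam \<longleftrightarrow>
     (\<forall>\<sigma>\<in>S. \<forall>u\<in>alive \<sigma>. \<forall>v\<in>alive \<sigma>. E \<sigma> u v \<le> lam * d u v)"

end

(*
  Fix weights F on pairs of arrived points and embed into the minimax
  (subdominant) ultrametric of F on the arrived points: the least t such that u and v are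
  joined by a path all of whose steps x y have F x y <= t. An ultrametric is a 1-HST. If the
  weight of a pair never changes after both points have arrived, new points only add paths,
  so distances only shrink. The embedding is non-contracting once every such path certifies
  d u v <= t: with F = (n - 1) d this holds since a simple path has at most n - 1 steps;
  without knowing n, the point of arrival rank m gets weight g m ~ m log m (log log m)^2, for
  which the sum of 1 / g m is at most 1, and F x y = 2 max (g x) (g y) d x y.

  Let real points y 0 < ... < y m arrive in this order. Monotonicity and the
  strong triangle inequality of the final HST bound the final distance of y 0 and y m by the
  largest distance of y i and y (i + 1) right after y (i + 1) arrived, i.e. by the largest
  lambda (i + 2) * (y (i + 1) - y i). Unit gaps give lambda >= n - 1; gaps proportional to
  1 / ((i + T) log (i + T)), whose sum diverges, rule out lambda n = n log n.
*)
theory Submission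
  imports Defs "HOL-Library.Nat_Bijection" "HOL-Library.Transitive_Closure_Table"
begin

section \<open>Rooted trees\<close>

lemma funpow_apply_add: "(f ^^ m) ((f ^^ n) x) = (f ^^ (m + n)) x"
  by (simp add: funpow_add)

definition tree_depth :: "nat \<Rightarrow> (nat \<Rightarrow> nat) \<Rightarrow> nat \<Rightarrow> nat" where
  "tree_depth r p v = (LEAST k. (p ^^ k) v = r)"

locale rooted_tree =
  fixes N :: "nat set" and r :: nat and p :: "nat \<Rightarrow> nat"
  assumes rooted_tree: "is_rooted_tree N r p"
begin

abbreviation depth :: "nat \<Rightarrow> nat" where
  "depth \<equiv> tree_depth r p"

lemma parent_in_nodes: "v \<in> N \<Longrightarrow> v \<noteq> r \<Longrightarrow> p v \<in> N"
  using rooted_tree unfolding is_rooted_tree_def by blast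

lemma funpow_depth: "v \<in> N \<Longrightarrow> (p ^^ depth v) v = r"
  unfolding tree_depth_def by (rule LeastI_ex) (use rooted_tree in \<open>auto simp: is_rooted_tree_def\<close>)

lemma funpow_below_depth: "k < depth v \<Longrightarrow> (p ^^ k) v \<noteq> r"
  unfolding tree_depth_def using not_less_Least by blast

lemma funpow_in_nodes:
  assumes "v \<in> N" "k \<le> depth v"
  shows "(p ^^ k) v \<in> N"
  using assms(2)
proof (induction k)
  case (Suc k)
  then show ?case using funpow_below_depth[of k v] parent_in_nodes by simp
qed (simp add: assms(1))

lemma depth_funpow:
  assumes "v \<in> N" "k \<le> depth v"
  shows "depth ((p ^^ k) v) = depth v - k"
proof -
  have "(p ^^ (depth v - k)) ((p ^^ k) v) = r"
    using funpow_depth[OF assms(1)] assms(2) by (simp add: funpow_apply_add)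
  moreover have "depth v - k \<le> j" if "(p ^^ j) ((p ^^ k) v) = r" for j
    using funpow_below_depth[of "j + k" v] that by (force simp: funpow_apply_add)
  ultimately show ?thesis
    unfolding tree_depth_def[of r p "(p ^^ k) v"] by (rule Least_equality)
qed

lemma tree_anc_iff:
  assumes "v \<in> N"
  shows "tree_anc r p u v \<longleftrightarrow> (\<exists>k\<le>depth v. u = (p ^^ k) v)"
proof
  assume "tree_anc r p u v"
  then obtain k where k: "(p ^^ k) v = u" "\<forall>j<k. (p ^^ j) v \<noteq> r"
    unfolding tree_anc_def by blast
  have "k \<le> depth v" using k(2) funpow_depth[OF assms] by (meson not_le)
  then show "\<exists>k\<le>depth v. u = (p ^^ k) v" using k by auto
next
  assume "\<exists>k\<le>depth v. u = (p ^^ k) v"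
  then obtain k where "k \<le> depth v" "u = (p ^^ k) v" by blast
  moreover have "(p ^^ j) v \<noteq> r" if "j < k" for j
    using funpow_below_depth[of j v] that \<open>k \<le> depth v\<close> by simp
  ultimately show "tree_anc r p u v" unfolding tree_anc_def by blast
qed

lemma tree_anc_in_nodes:
  assumes "v \<in> N" "tree_anc r p u v"
  shows "u \<in> N"
proof -
  obtain k where "k \<le> depth v" "u = (p ^^ k) v" using tree_anc_iff[OF assms(1)] assms(2) by blast
  then show ?thesis using funpow_in_nodes[OF assms(1)] by simp
qed

lemma tree_anc_refl: "v \<in> N \<Longrightarrow> tree_anc r p v v"
  unfolding tree_anc_def by (intro exI[of _ 0]) simp

lemma tree_anc_funpow:
  assumes "v \<in> N" "k \<le> depth v"
  shows "tree_anc r p w ((p ^^ k) v) \<longleftrightarrow> (\<exists>j. k \<le> j \<and> j \<le> depth v \<and> w = (p ^^ j) v)"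
proof
  assume "tree_anc r p w ((p ^^ k) v)"
  then obtain i where "i \<le> depth ((p ^^ k) v)" "w = (p ^^ i) ((p ^^ k) v)"
    using tree_anc_iff[OF funpow_in_nodes[OF assms]] by blast
  then show "\<exists>j. k \<le> j \<and> j \<le> depth v \<and> w = (p ^^ j) v"
    using depth_funpow[OF assms] assms(2) by (intro exI[of _ "i + k"]) (simp add: funpow_apply_add)
next
  assume "\<exists>j. k \<le> j \<and> j \<le> depth v \<and> w = (p ^^ j) v"
  then obtain j where j: "k \<le> j" "j \<le> depth v" "w = (p ^^ j) v" by blast
  then have "w = (p ^^ (j - k)) ((p ^^ k) v)" by (simp add: funpow_apply_add)
  moreover have "j - k \<le> depth ((p ^^ k) v)" using depth_funpow[OF assms] j by simp
  ultimately show "tree_anc r p w ((p ^^ k) v)"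
    using tree_anc_iff[OF funpow_in_nodes[OF assms]] by blast
qed

lemma tree_anc_funpowI:
  assumes "v \<in> N" "k \<le> j" "j \<le> depth v"
  shows "tree_anc r p ((p ^^ j) v) ((p ^^ k) v)"
  using tree_anc_funpow[OF assms(1) order_trans[OF assms(2,3)]] assms(2,3) by blast

lemma tree_anc_trans:
  assumes "v \<in> N" "tree_anc r p u v" "tree_anc r p w u"
  shows "tree_anc r p w v"
proof -
  obtain k where k: "k \<le> depth v" "u = (p ^^ k) v" using tree_anc_iff[OF assms(1)] assms(2) by blast
  with assms(3) have "tree_anc r p w ((p ^^ k) v)" by simp
  then obtain j where "j \<le> depth v" "w = (p ^^ j) v"
    using tree_anc_funpow[OF assms(1) k(1)] by blast
  then show ?thesis using tree_anc_iff[OF assms(1)] by blast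
qed

lemma tree_anc_antisym:
  assumes "v \<in> N" "tree_anc r p u v" "tree_anc r p v u"
  shows "u = v"
proof -
  obtain k where k: "k \<le> depth v" "u = (p ^^ k) v" using tree_anc_iff[OF assms(1)] assms(2) by blast
  with assms(3) have "tree_anc r p v ((p ^^ k) v)" by simp
  then obtain j where "k \<le> j" "j \<le> depth v" "v = (p ^^ j) v"
    using tree_anc_funpow[OF assms(1) k(1)] by blast
  then have "depth v = depth v - j" using depth_funpow[OF assms(1)] by metis
  then have "k = 0" using \<open>k \<le> j\<close> \<open>j \<le> depth v\<close> by linarith
  then show ?thesis using k by simp
qed

lemma tree_anc_linear:
  assumes "v \<in> N" "tree_anc r p u v" "tree_anc r p w v"
  shows "tree_anc r p u w \<or> tree_anc r p w u"
proof -
  obtain k where k: "k \<le> depth v" "u = (p ^^ k) v" using tree_anc_iff[OF assms(1)] assms(2) by blast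
  obtain j where j: "j \<le> depth v" "w = (p ^^ j) v" using tree_anc_iff[OF assms(1)] assms(3) by blast
  show ?thesis
  proof (cases "k \<le> j")
    case True
    then show ?thesis using tree_anc_funpowI[of v k j] assms(1) j k by simp
  next
    case False
    then show ?thesis using tree_anc_funpowI[of v j k] assms(1) j k by simp
  qed
qed

definition is_lca :: "nat \<Rightarrow> nat \<Rightarrow> nat \<Rightarrow> bool" where
  "is_lca a c w \<longleftrightarrow> tree_anc r p w a \<and> tree_anc r p w c \<and>
     (\<forall>w'. tree_anc r p w' a \<and> tree_anc r p w' c \<longrightarrow> tree_anc r p w' w)"

lemma is_lca_unique:
  assumes "a \<in> N" "is_lca a c w" "is_lca a c w'"
  shows "w = w'"
proof -
  have "tree_anc r p w w'" "tree_anc r p w' w" "tree_anc r p w' a"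
    using assms(2,3) unfolding is_lca_def by blast+
  then show ?thesis using tree_anc_antisym tree_anc_in_nodes[OF assms(1)] by blast
qed

lemma is_lca_exists:
  assumes "a \<in> N" "c \<in> N"
  shows "\<exists>w. is_lca a c w"
proof -
  define K where "K = (LEAST k. k \<le> depth a \<and> tree_anc r p ((p ^^ k) a) c)"
  have "depth a \<le> depth a \<and> tree_anc r p ((p ^^ depth a) a) c"
    using funpow_depth[OF assms(1)] funpow_depth[OF assms(2)] tree_anc_iff[OF assms(2)] by auto
  then have K: "K \<le> depth a" "tree_anc r p ((p ^^ K) a) c"
    unfolding K_def by (metis (mono_tags, lifting) LeastI)+
  have "is_lca a c ((p ^^ K) a)"
    unfolding is_lca_def
  proof (intro conjI allI impI)
    show "tree_anc r p ((p ^^ K) a) a" using K tree_anc_iff[OF assms(1)] by blast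
    show "tree_anc r p ((p ^^ K) a) c" by (fact K(2))
    fix w assume w: "tree_anc r p w a \<and> tree_anc r p w c"
    then obtain k where k: "k \<le> depth a" "w = (p ^^ k) a" using tree_anc_iff[OF assms(1)] by blast
    moreover have "K \<le> k" unfolding K_def using w k by (simp add: Least_le)
    ultimately show "tree_anc r p w ((p ^^ K) a)"
      using tree_anc_funpowI[OF assms(1) \<open>K \<le> k\<close> k(1)] by simp
  qed
  then show ?thesis by blast
qed

lemma is_lca_tree_lca:
  assumes "a \<in> N" "c \<in> N"
  shows "is_lca a c (tree_lca r p a c)"
proof -
  obtain w where w: "is_lca a c w" using is_lca_exists[OF assms] by blast
  have "w' = w" if "is_lca a c w'" for w' using is_lca_unique[OF assms(1) that w] .
  with w show ?thesis unfolding tree_lca_def is_lca_def[symmetric] by (rule theI)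
qed

lemma tree_lca_eqI: "a \<in> N \<Longrightarrow> c \<in> N \<Longrightarrow> is_lca a c w \<Longrightarrow> tree_lca r p a c = w"
  by (rule is_lca_unique[OF _ is_lca_tree_lca])

lemma antitone_along_ancestors:
  fixes \<phi> :: "nat \<Rightarrow> real"
  assumes "\<forall>x\<in>N. x \<noteq> r \<longrightarrow> \<phi> x \<le> \<phi> (p x)" "v \<in> N" "tree_anc r p u v"
  shows "\<phi> v \<le> \<phi> u"
proof -
  obtain k where k: "k \<le> depth v" "u = (p ^^ k) v" using tree_anc_iff[OF assms(2)] assms(3) by blast
  have "\<phi> v \<le> \<phi> ((p ^^ k) v)" using k(1)
  proof (induction k)
    case (Suc k)
    then have "(p ^^ k) v \<in> N" "(p ^^ k) v \<noteq> r" using funpow_below_depth funpow_in_nodes assms by auto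
    then show ?case using Suc assms(1) by fastforce
  qed simp
  then show ?thesis using k by simp
qed


lemma tree_lca_self: "a \<in> N \<Longrightarrow> tree_lca r p a a = a"
  by (rule tree_lca_eqI) (auto simp: is_lca_def tree_anc_refl)

lemma tree_lca_ultra:
  fixes \<phi> :: "nat \<Rightarrow> real"
  assumes monotone: "\<forall>x\<in>N. x \<noteq> r \<longrightarrow> \<phi> x \<le> \<phi> (p x)" and N: "a \<in> N" "b \<in> N" "c \<in> N"
  shows "\<phi> (tree_lca r p a c) \<le> max (\<phi> (tree_lca r p a b)) (\<phi> (tree_lca r p b c))"
proof -
  define w1 w2 w3 where "w1 = tree_lca r p a b" "w2 = tree_lca r p b c" "w3 = tree_lca r p a c"
  have lca: "is_lca a b w1" "is_lca b c w2" "is_lca a c w3"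
    using is_lca_tree_lca N w1_w2_w3_def by auto
  have w3: "w3 \<in> N" using lca(3) N(1) tree_anc_in_nodes unfolding is_lca_def by blast
  have "tree_anc r p w1 w2 \<or> tree_anc r p w2 w1"
    using tree_anc_linear[of b w1 w2] lca(1,2) N(2) unfolding is_lca_def by blast
  then have "tree_anc r p w1 w3 \<or> tree_anc r p w2 w3"
  proof
    assume "tree_anc r p w1 w2"
    then have "tree_anc r p w1 c" using tree_anc_trans[of c w2 w1] lca(2) N(3) unfolding is_lca_def by blast
    then show ?thesis using lca(1,3) unfolding is_lca_def by blast
  next
    assume "tree_anc r p w2 w1"
    then have "tree_anc r p w2 a" using tree_anc_trans[of a w1 w2] lca(1) N(1) unfolding is_lca_def by blast
    then show ?thesis using lca(2,3) unfolding is_lca_def by blast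
  qed
  then have "\<phi> w3 \<le> \<phi> w1 \<or> \<phi> w3 \<le> \<phi> w2" using antitone_along_ancestors[OF monotone w3] by blast
  then show ?thesis unfolding w1_w2_w3_def by auto
qed

end

section \<open>HSTs and ultrametrics\<close>

definition ultrametric_on :: "'a set \<Rightarrow> ('a \<Rightarrow> 'a \<Rightarrow> real) \<Rightarrow> bool" where
  "ultrametric_on L \<rho> \<longleftrightarrow>
     (\<forall>x\<in>L. \<forall>y\<in>L. \<rho> x y = 0 \<longleftrightarrow> x = y) \<and> (\<forall>x\<in>L. \<forall>y\<in>L. \<rho> x y = \<rho> y x) \<and>
     (\<forall>x\<in>L. \<forall>y\<in>L. \<forall>z\<in>L. \<rho> x z \<le> max (\<rho> x y) (\<rho> y z))"

lemma ultrametric_onD: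
  assumes "ultrametric_on L \<rho>" "x \<in> L" "y \<in> L"
  shows "\<rho> x x = 0" "\<rho> x y = \<rho> y x" "\<rho> x y \<ge> 0" "x \<noteq> y \<Longrightarrow> \<rho> x y > 0"
    "z \<in> L \<Longrightarrow> \<rho> x z \<le> max (\<rho> x y) (\<rho> y z)"
proof -
  note U = assms(1)[unfolded ultrametric_on_def]
  show zero: "\<rho> x x = 0" and sym: "\<rho> x y = \<rho> y x" using U assms(2,3) by simp_all
  show ultra: "z \<in> L \<Longrightarrow> \<rho> x z \<le> max (\<rho> x y) (\<rho> y z)" for z
    using U assms(2,3) by simp
  have "\<rho> x x \<le> max (\<rho> x y) (\<rho> y x)" using ultra assms(2) .
  then show nonneg: "\<rho> x y \<ge> 0" using zero sym by simp
  show "x \<noteq> y \<Longrightarrow> \<rho> x y > 0" using nonneg U assms(2,3) by (simp add: order_le_less)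
qed

lemma muHST_ultrametric:
  assumes hst: "is_muHST \<mu> L \<rho>" and "\<mu> \<ge> 1" and xyz: "x \<in> L" "y \<in> L" "z \<in> L"
  shows "\<rho> x x = 0" and "\<rho> x z \<le> max (\<rho> x y) (\<rho> y z)"
proof -
  have "L \<noteq> {}" using xyz by blast
  then obtain N r p \<phi> lf where "is_rooted_tree N r p" and
      leaves: "bij_betw lf L {v. tree_leaf N r p v}" and
      nonneg: "\<forall>v\<in>N. \<phi> v \<ge> 0" and zero: "\<forall>v\<in>N. \<phi> v = 0 \<longleftrightarrow> tree_leaf N r p v" and
      decay: "\<forall>v\<in>N. v \<noteq> r \<longrightarrow> \<phi> v \<le> \<phi> (p v) / \<mu>" and
      \<rho>: "\<forall>x\<in>L. \<forall>y\<in>L. \<rho> x y = \<phi> (tree_lca r p (lf x) (lf y))"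
    using hst unfolding is_muHST_def by blast
  interpret rooted_tree N r p by standard fact
  have lf: "lf x \<in> N" "tree_leaf N r p (lf x)" if "x \<in> L" for x
    using leaves that unfolding bij_betw_def tree_leaf_def by auto
  have "\<phi> (p v) / \<mu> \<le> \<phi> (p v)" if "v \<in> N" "v \<noteq> r" for v
    using nonneg parent_in_nodes[OF that] \<open>\<mu> \<ge> 1\<close> divide_left_mono[of 1 \<mu> "\<phi> (p v)"] by simp
  with decay have monotone: "\<forall>v\<in>N. v \<noteq> r \<longrightarrow> \<phi> v \<le> \<phi> (p v)" by force
  show "\<rho> x x = 0" using \<rho> zero lf xyz tree_lca_self by simp
  show "\<rho> x z \<le> max (\<rho> x y) (\<rho> y z)"
    using \<rho> xyz tree_lca_ultra[OF monotone lf(1)[OF xyz(1)] lf(1)[OF xyz(2)] lf(1)[OF xyz(3)]] by simp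
qed

text \<open>The tree of a finite ultrametric: its levels are the distinct distances
  \<open>0 = radius 0 < \<dots> < radius height\<close>, and the node of level \<open>j\<close> containing \<open>x\<close> is the
  cluster \<open>{y. \<rho> x y \<le> radius j}\<close>, numbered by \<open>j\<close> and the least code of its members.\<close>

locale finite_ultrametric =
  fixes L :: "'a set" and \<rho> :: "'a \<Rightarrow> 'a \<Rightarrow> real" and code :: "'a \<Rightarrow> nat"
  assumes finite: "finite L" and nonempty: "L \<noteq> {}"
    and ultrametric: "ultrametric_on L \<rho>" and code: "inj_on code L"
begin

definition radii :: "real list" where
  "radii = sorted_list_of_set ((\<lambda>(x, y). \<rho> x y) ` (L \<times> L))"

definition height :: nat where
  "height = length radii - 1"

definition radius :: "nat \<Rightarrow> real" where
  "radius j = radii ! j"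

lemma length_radii: "length radii = Suc height"
proof -
  have "radii \<noteq> []" using nonempty finite unfolding radii_def by auto
  then show ?thesis unfolding height_def by simp
qed

lemma radius_strict_mono: "i < j \<Longrightarrow> j \<le> height \<Longrightarrow> radius i < radius j"
  using sorted_wrt_nth_less[of "(<)" radii i j] length_radii unfolding radius_def radii_def by simp

lemma radius_mono: "i \<le> j \<Longrightarrow> j \<le> height \<Longrightarrow> radius i \<le> radius j"
  using radius_strict_mono[of i j] by (cases "i = j") auto

lemma rho_is_radius:
  assumes "x \<in> L" "y \<in> L"
  shows "\<exists>j\<le>height. radius j = \<rho> x y"
proof -
  have "\<rho> x y \<in> set radii" using assms finite unfolding radii_def by force
  then show ?thesis using length_radii unfolding radius_def by (metis in_set_conv_nth less_Suc_eq_le)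
qed

lemma radius_is_rho:
  assumes "j \<le> height"
  obtains x y where "x \<in> L" "y \<in> L" "radius j = \<rho> x y"
proof -
  have "radius j \<in> set radii" using assms length_radii unfolding radius_def by simp
  then show ?thesis using finite that unfolding radii_def by auto
qed

lemma radius_0: "radius 0 = 0"
proof -
  obtain x where x: "x \<in> L" using nonempty by blast
  obtain i where "i \<le> height" "radius i = \<rho> x x" using rho_is_radius[OF x x] by blast
  then have "radius 0 \<le> 0" using radius_mono[of 0 i] ultrametric_onD(1)[OF ultrametric x x] by simp
  moreover obtain y z where "y \<in> L" "z \<in> L" "radius 0 = \<rho> y z" using radius_is_rho[of 0] by blast
  then have "radius 0 \<ge> 0" using ultrametric_onD(3)[OF ultrametric] by simp
  ultimately show ?thesis by simp
qed

lemma radius_nonneg: "j \<le> height \<Longrightarrow> radius j \<ge> 0"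
  using radius_mono[of 0 j] radius_0 by simp

lemma rho_le_radius_height:
  assumes "x \<in> L" "y \<in> L"
  shows "\<rho> x y \<le> radius height"
proof -
  obtain j where "j \<le> height" "radius j = \<rho> x y" using rho_is_radius[OF assms] by blast
  then show ?thesis using radius_mono[of j height] by simp
qed

lemma rho_le_trans:
  assumes "x \<in> L" "w \<in> L" "y \<in> L" "\<rho> x w \<le> t" "\<rho> w y \<le> t"
  shows "\<rho> x y \<le> t"
  using ultrametric_onD(5)[OF ultrametric assms(1,2,3)] assms(4,5) by simp

lemma rho_sym: "x \<in> L \<Longrightarrow> y \<in> L \<Longrightarrow> \<rho> x y = \<rho> y x"
  by (rule ultrametric_onD(2)[OF ultrametric])

definition cluster :: "nat \<Rightarrow> 'a \<Rightarrow> 'a set" where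
  "cluster j x = {y \<in> L. \<rho> x y \<le> radius j}"

definition cluster_code :: "nat \<Rightarrow> 'a \<Rightarrow> nat" where
  "cluster_code j x = Min (code ` cluster j x)"

lemma cluster_eq:
  assumes "x \<in> L" "y \<in> L" "\<rho> x y \<le> radius j"
  shows "cluster j x = cluster j y"
proof (intro equalityI subsetI)
  fix w assume "w \<in> cluster j x"
  moreover have "\<rho> y x \<le> radius j" using assms rho_sym by metis
  ultimately show "w \<in> cluster j y" using rho_le_trans[of y x w] assms unfolding cluster_def by auto
next
  fix w assume "w \<in> cluster j y"
  then show "w \<in> cluster j x" using rho_le_trans[of x y w] assms unfolding cluster_def by auto
qed

lemma self_in_cluster: "x \<in> L \<Longrightarrow> j \<le> height \<Longrightarrow> x \<in> cluster j x"
  using ultrametric_onD(1)[OF ultrametric] radius_nonneg unfolding cluster_def by simp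

lemma cluster_code_mem:
  assumes "x \<in> L" "j \<le> height"
  obtains w where "w \<in> cluster j x" "cluster_code j x = code w"
proof -
  have "finite (cluster j x)" using finite unfolding cluster_def by simp
  then have "cluster_code j x \<in> code ` cluster j x"
    unfolding cluster_code_def using self_in_cluster[OF assms] by (intro Min_in) auto
  then show ?thesis using that by blast
qed

lemma cluster_code_eq_iff:
  assumes "x \<in> L" "y \<in> L" "j \<le> height"
  shows "cluster_code j x = cluster_code j y \<longleftrightarrow> \<rho> x y \<le> radius j"
proof
  assume "\<rho> x y \<le> radius j"
  then show "cluster_code j x = cluster_code j y" unfolding cluster_code_def using cluster_eq assms by metis
next
  assume eq: "cluster_code j x = cluster_code j y"
  obtain w where w: "w \<in> cluster j x" "cluster_code j x = code w" using cluster_code_mem assms by metis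
  obtain w' where w': "w' \<in> cluster j y" "cluster_code j y = code w'" using cluster_code_mem assms by metis
  have "w = w'" using code w w' eq unfolding cluster_def inj_on_def by auto
  then have "\<rho> x w \<le> radius j" "\<rho> w y \<le> radius j" "w \<in> L"
    using w w' rho_sym assms(2) unfolding cluster_def by auto
  then show "\<rho> x y \<le> radius j" using rho_le_trans assms(1,2) by blast
qed

definition node :: "nat \<Rightarrow> 'a \<Rightarrow> nat" where
  "node j x = prod_encode (j, cluster_code j x)"

lemma node_eq_iff:
  assumes "x \<in> L" "y \<in> L" "j \<le> height" "j' \<le> height"
  shows "node j x = node j' y \<longleftrightarrow> j = j' \<and> \<rho> x y \<le> radius j"
  using cluster_code_eq_iff[of x y j] assms unfolding node_def by (auto simp: prod_encode_eq)

definition nodes :: "nat set" where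
  "nodes = (\<lambda>(j, x). node j x) ` ({..height} \<times> L)"

lemma node_in_nodes: "x \<in> L \<Longrightarrow> j \<le> height \<Longrightarrow> node j x \<in> nodes"
  unfolding nodes_def by force

lemma nodesE:
  assumes "v \<in> nodes"
  obtains j x where "j \<le> height" "x \<in> L" "v = node j x"
  using assms unfolding nodes_def by auto

definition root :: nat where
  "root = node height (SOME x. x \<in> L)"

lemma node_eq_root_iff:
  assumes "x \<in> L" "j \<le> height"
  shows "node j x = root \<longleftrightarrow> j = height"
proof -
  have some: "(SOME x. x \<in> L) \<in> L" using nonempty by (simp add: some_in_eq)
  show ?thesis unfolding root_def
    using node_eq_iff[OF assms(1) some assms(2) order_refl] rho_le_radius_height[OF assms(1) some]
    by auto
qed

definition parent :: "nat \<Rightarrow> nat" where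
  "parent v = (case prod_decode v of (j, c) \<Rightarrow> node (Suc j) (inv_into L code c))"

lemma parent_node:
  assumes "x \<in> L" "j < height"
  shows "parent (node j x) = node (Suc j) x"
proof -
  obtain w where w: "w \<in> cluster j x" "cluster_code j x = code w"
    using cluster_code_mem[of x j] assms by auto
  have "w \<in> L" using w unfolding cluster_def by simp
  then have "inv_into L code (cluster_code j x) = w" using w code by (simp add: inv_into_f_f)
  moreover have "\<rho> x w \<le> radius (Suc j)"
    using w radius_mono[of j "Suc j"] assms unfolding cluster_def by auto
  then have "node (Suc j) w = node (Suc j) x"
    using node_eq_iff[of w x "Suc j" "Suc j"] \<open>w \<in> L\<close> assms rho_sym by auto
  ultimately show ?thesis unfolding parent_def node_def[of j] by simp
qed

lemma funpow_parent_node: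
  assumes "x \<in> L" "j + i \<le> height"
  shows "(parent ^^ i) (node j x) = node (j + i) x"
  using assms(2)
proof (induction i)
  case (Suc i)
  then show ?case using parent_node[OF assms(1), of "j + i"] by simp
qed simp

lemma is_rooted_tree: "is_rooted_tree nodes root parent"
  unfolding is_rooted_tree_def
proof (intro conjI ballI impI)
  show "finite nodes" unfolding nodes_def using finite by simp
  show "root \<in> nodes" unfolding root_def using nonempty by (simp add: node_in_nodes some_in_eq)
next
  fix v assume "v \<in> nodes" "v \<noteq> root"
  from \<open>v \<in> nodes\<close> obtain j x where "j \<le> height" "x \<in> L" "v = node j x" by (rule nodesE)
  moreover have "j < height" using calculation node_eq_root_iff \<open>v \<noteq> root\<close> by auto
  ultimately show "parent v \<in> nodes" using parent_node node_in_nodes by simp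
next
  fix v assume "v \<in> nodes"
  then obtain j x where "j \<le> height" "x \<in> L" "v = node j x" by (rule nodesE)
  then have "(parent ^^ (height - j)) v = root"
    using funpow_parent_node[of x j "height - j"] node_eq_root_iff[of x height] by simp
  then show "\<exists>k. (parent ^^ k) v = root" by blast
qed

sublocale tree: rooted_tree nodes root parent
  by standard (rule is_rooted_tree)

lemma tree_anc_node_iff:
  assumes "x \<in> L" "j \<le> height"
  shows "tree_anc root parent u (node j x) \<longleftrightarrow> (\<exists>i. j \<le> i \<and> i \<le> height \<and> u = node i x)"
proof
  assume "tree_anc root parent u (node j x)"
  then obtain k where k: "(parent ^^ k) (node j x) = u" "\<forall>i<k. (parent ^^ i) (node j x) \<noteq> root"
    unfolding tree_anc_def by blast
  have "k \<le> height - j"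
  proof (rule ccontr)
    assume "\<not> k \<le> height - j"
    then have "(parent ^^ (height - j)) (node j x) \<noteq> root" using k by auto
    then show False using funpow_parent_node[of x j "height - j"] node_eq_root_iff assms by simp
  qed
  then show "\<exists>i. j \<le> i \<and> i \<le> height \<and> u = node i x"
    using k funpow_parent_node[of x j k] assms by (intro exI[of _ "j + k"]) auto
next
  assume "\<exists>i. j \<le> i \<and> i \<le> height \<and> u = node i x"
  then obtain i where i: "j \<le> i" "i \<le> height" "u = node i x" by blast
  have "(parent ^^ (i - j)) (node j x) = u" using funpow_parent_node[of x j "i - j"] i assms by simp
  moreover have "\<forall>i'<i - j. (parent ^^ i') (node j x) \<noteq> root"
    using funpow_parent_node[of x j] node_eq_root_iff i assms by auto
  ultimately show "tree_anc root parent u (node j x)" unfolding tree_anc_def by blast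
qed

lemma tree_leaf_node_iff:
  assumes "x \<in> L" "j \<le> height"
  shows "tree_leaf nodes root parent (node j x) \<longleftrightarrow> j = 0"
proof
  assume leaf: "tree_leaf nodes root parent (node j x)"
  show "j = 0"
  proof (rule ccontr)
    assume "j \<noteq> 0"
    then have "node (j - 1) x \<in> nodes" "node (j - 1) x \<noteq> root" "parent (node (j - 1) x) = node j x"
      using assms node_in_nodes node_eq_root_iff[of x "j - 1"] parent_node[of x "j - 1"] by auto
    then show False using leaf unfolding tree_leaf_def by blast
  qed
next
  assume "j = 0"
  have "parent w \<noteq> node 0 x" if "w \<in> nodes" "w \<noteq> root" for w
  proof -
    obtain i y where "i \<le> height" "y \<in> L" "w = node i y" using \<open>w \<in> nodes\<close> by (rule nodesE)
    moreover have "i < height" using calculation node_eq_root_iff \<open>w \<noteq> root\<close> by auto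
    ultimately show ?thesis using parent_node node_eq_iff[of y x "Suc i" 0] assms by auto
  qed
  then show "tree_leaf nodes root parent (node j x)"
    unfolding tree_leaf_def using node_in_nodes assms \<open>j = 0\<close> by blast
qed

definition leaf :: "'a \<Rightarrow> nat" where
  "leaf x = node 0 x"

lemma bij_betw_leaf: "bij_betw leaf L {v. tree_leaf nodes root parent v}"
  unfolding bij_betw_def
proof
  show "inj_on leaf L"
  proof
    fix x y assume "x \<in> L" "y \<in> L" "leaf x = leaf y"
    then have "\<rho> x y \<le> 0" using node_eq_iff[of x y 0 0] radius_0 unfolding leaf_def by simp
    then show "x = y" using ultrametric_onD(4)[OF ultrametric \<open>x \<in> L\<close> \<open>y \<in> L\<close>] by force
  qed
  show "leaf ` L = {v. tree_leaf nodes root parent v}"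
  proof (intro equalityI subsetI)
    fix v assume "v \<in> leaf ` L"
    then show "v \<in> {v. tree_leaf nodes root parent v}" using tree_leaf_node_iff unfolding leaf_def by auto
  next
    fix v assume "v \<in> {v. tree_leaf nodes root parent v}"
    then have "tree_leaf nodes root parent v" "v \<in> nodes" unfolding tree_leaf_def by auto
    moreover obtain j x where "j \<le> height" "x \<in> L" "v = node j x" using \<open>v \<in> nodes\<close> by (rule nodesE)
    ultimately show "v \<in> leaf ` L" using tree_leaf_node_iff unfolding leaf_def by auto
  qed
qed

definition weight :: "nat \<Rightarrow> real" where
  "weight v = radius (fst (prod_decode v))"

lemma weight_node: "weight (node j x) = radius j"
  unfolding weight_def node_def by simp

lemma tree_lca_leaf:
  assumes "x \<in> L" "y \<in> L" "j \<le> height" "radius j = \<rho> x y"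
  shows "tree_lca root parent (leaf x) (leaf y) = node j x"
proof (rule tree.tree_lca_eqI)
  show "leaf x \<in> nodes" "leaf y \<in> nodes" unfolding leaf_def using assms node_in_nodes by auto
  have "node j x = node j y" using node_eq_iff[of x y j j] assms by simp
  then show "tree.is_lca (leaf x) (leaf y) (node j x)"
    unfolding tree.is_lca_def leaf_def tree_anc_node_iff[OF assms(1) le0] tree_anc_node_iff[OF assms(2) le0]
  proof (intro conjI allI impI)
    fix w assume "(\<exists>i\<ge>0. i \<le> height \<and> w = node i x) \<and> (\<exists>i\<ge>0. i \<le> height \<and> w = node i y)"
    then obtain i i' where i: "i \<le> height" "w = node i x" "i' \<le> height" "w = node i' y" by auto
    then have "\<rho> x y \<le> radius i" using node_eq_iff[of x y i i'] assms by auto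
    have "j \<le> i"
    proof (rule ccontr)
      assume "\<not> j \<le> i"
      then have "radius i < radius j" using radius_strict_mono assms(3) by simp
      then show False using \<open>\<rho> x y \<le> radius i\<close> assms(4) by simp
    qed
    then show "tree_anc root parent w (node j x)" using tree_anc_node_iff[OF assms(1,3)] i by auto
  qed (use assms \<open>node j x = node j y\<close> in auto)
qed

lemma is_muHST_1: "is_muHST 1 L \<rho>"
proof -
  have "\<forall>v\<in>nodes. weight v \<ge> 0" using weight_node radius_nonneg by (auto elim: nodesE)
  moreover have "\<forall>v\<in>nodes. weight v = 0 \<longleftrightarrow> tree_leaf nodes root parent v"
  proof
    fix v assume "v \<in> nodes"
    then obtain j x where "j \<le> height" "x \<in> L" "v = node j x" by (rule nodesE)
    then show "weight v = 0 \<longleftrightarrow> tree_leaf nodes root parent v"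
      using tree_leaf_node_iff weight_node radius_0 radius_strict_mono[of 0 j] by (cases "j = 0") auto
  qed
  moreover have "\<forall>v\<in>nodes. v \<noteq> root \<longrightarrow> weight v \<le> weight (parent v) / 1"
  proof (intro ballI impI)
    fix v assume "v \<in> nodes" "v \<noteq> root"
    from \<open>v \<in> nodes\<close> obtain j x where "j \<le> height" "x \<in> L" "v = node j x" by (rule nodesE)
    moreover have "j < height" using calculation node_eq_root_iff \<open>v \<noteq> root\<close> by auto
    ultimately show "weight v \<le> weight (parent v) / 1"
      using parent_node weight_node radius_mono[of j "Suc j"] by simp
  qed
  moreover have "\<forall>x\<in>L. \<forall>y\<in>L. \<rho> x y = weight (tree_lca root parent (leaf x) (leaf y))"
    using rho_is_radius tree_lca_leaf weight_node by fastforce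
  ultimately show ?thesis
    unfolding is_muHST_def using is_rooted_tree bij_betw_leaf by blast
qed

end

lemma finite_ultrametric_is_1HST:
  assumes "finite L" "ultrametric_on L \<rho>"
  shows "is_muHST 1 L \<rho>"
proof (cases "L = {}")
  case False
  obtain code :: "'a \<Rightarrow> nat" where "inj_on code L"
    using finite_imp_inj_to_nat_seg[OF assms(1)] by blast
  then interpret finite_ultrametric L \<rho> code using assms False by unfold_locales
  show ?thesis by (rule is_muHST_1)
qed (simp add: is_muHST_def)

section \<open>Minimax path distances\<close>

lemma is_metricD:
  assumes "is_metric d"
  shows "d x x = 0" "d x y = d y x" "d x z \<le> d x y + d y z" "d x y \<ge> 0" "x \<noteq> y \<Longrightarrow> d x y > 0"
proof -
  show zero: "d x x = 0" and sym: "d x y = d y x" and tri: "d x z \<le> d x y + d y z" for z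
    using assms unfolding is_metric_def by simp_all
  have "d x x \<le> d x y + d y x" by (rule tri)
  then show nonneg: "d x y \<ge> 0" using zero sym by simp
  show "x \<noteq> y \<Longrightarrow> d x y > 0" using nonneg assms unfolding is_metric_def by (simp add: order_le_less)
qed

definition threshold_rel :: "'a set \<Rightarrow> ('a \<Rightarrow> 'a \<Rightarrow> real) \<Rightarrow> real \<Rightarrow> 'a \<Rightarrow> 'a \<Rightarrow> bool" where
  "threshold_rel S f t a b \<longleftrightarrow> a \<in> S \<and> b \<in> S \<and> f a b \<le> t"

definition minimax_levels :: "'a set \<Rightarrow> ('a \<Rightarrow> 'a \<Rightarrow> real) \<Rightarrow> 'a \<Rightarrow> 'a \<Rightarrow> real set" where
  "minimax_levels S f u v = {t \<in> (\<lambda>(a, b). f a b) ` (S \<times> S). (threshold_rel S f t)\<^sup>*\<^sup>* u v}"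

text \<open>The least \<open>t\<close> such that \<open>u\<close> and \<open>v\<close> are joined by a path in \<open>S\<close> all of whose
  steps have \<open>f\<close>-length at most \<open>t\<close>: the subdominant ultrametric of \<open>f\<close> on \<open>S\<close>.\<close>
definition minimax_dist :: "'a set \<Rightarrow> ('a \<Rightarrow> 'a \<Rightarrow> real) \<Rightarrow> 'a \<Rightarrow> 'a \<Rightarrow> real" where
  "minimax_dist S f u v = (if u = v then 0 else Min (minimax_levels S f u v))"

lemma finite_minimax_levels: "finite S \<Longrightarrow> finite (minimax_levels S f u v)"
  unfolding minimax_levels_def by simp

lemma in_minimax_levels: "u \<in> S \<Longrightarrow> v \<in> S \<Longrightarrow> f u v \<in> minimax_levels S f u v"
  unfolding minimax_levels_def by (auto simp: threshold_rel_def intro!: r_into_rtranclp)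

lemma minimax_dist_in_levels:
  "finite S \<Longrightarrow> u \<in> S \<Longrightarrow> v \<in> S \<Longrightarrow> u \<noteq> v \<Longrightarrow> minimax_dist S f u v \<in> minimax_levels S f u v"
  unfolding minimax_dist_def using finite_minimax_levels in_minimax_levels by (metis Min_in empty_iff)

lemma minimax_dist_le:
  "finite S \<Longrightarrow> u \<in> S \<Longrightarrow> v \<in> S \<Longrightarrow> u \<noteq> v \<Longrightarrow> minimax_dist S f u v \<le> f u v"
  unfolding minimax_dist_def by (simp add: Min_le finite_minimax_levels in_minimax_levels)

lemma minimax_dist_le_level:
  "finite S \<Longrightarrow> u \<noteq> v \<Longrightarrow> t \<in> minimax_levels S f u v \<Longrightarrow> minimax_dist S f u v \<le> t"
  unfolding minimax_dist_def by (simp add: Min_le finite_minimax_levels)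

lemma minimax_path:
  assumes "finite S" "u \<in> S" "v \<in> S" "u \<noteq> v"
  obtains xs where "rtrancl_path (threshold_rel S f (minimax_dist S f u v)) u xs v" "distinct (u # xs)"
proof -
  have "(threshold_rel S f (minimax_dist S f u v))\<^sup>*\<^sup>* u v"
    using minimax_dist_in_levels[OF assms] unfolding minimax_levels_def by simp
  then obtain ys where "rtrancl_path (threshold_rel S f (minimax_dist S f u v)) u ys v"
    using rtranclp_eq_rtrancl_path by metis
  then show ?thesis using rtrancl_path_distinct that by metis
qed

lemma rtrancl_path_threshold_subset:
  "rtrancl_path (threshold_rel S f t) a xs b \<Longrightarrow> a \<in> S \<Longrightarrow> set xs \<subseteq> S"
  by (induction rule: rtrancl_path.induct) (auto simp: threshold_rel_def)

lemma minimax_dist_pos: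
  assumes "finite S" "u \<in> S" "v \<in> S" "u \<noteq> v" and pos: "\<And>a b. a \<in> S \<Longrightarrow> b \<in> S \<Longrightarrow> a \<noteq> b \<Longrightarrow> f a b > 0"
  shows "minimax_dist S f u v > 0"
proof -
  obtain xs where path: "rtrancl_path (threshold_rel S f (minimax_dist S f u v)) u xs v"
    and "distinct (u # xs)"
    using minimax_path[OF assms(1-4)] by metis
  from path show ?thesis
  proof cases
    case (step y ys)
    then have "y \<noteq> u" "u \<in> S" "y \<in> S" "f u y \<le> minimax_dist S f u v"
      using \<open>distinct (u # xs)\<close> unfolding threshold_rel_def by auto
    moreover have "f u y > 0" using pos calculation by simp
    ultimately show ?thesis by linarith
  qed (use assms(4) in simp)
qed

lemma minimax_dist_nonneg:
  assumes "finite S" "u \<in> S" "v \<in> S" and pos: "\<And>a b. a \<in> S \<Longrightarrow> b \<in> S \<Longrightarrow> a \<noteq> b \<Longrightarrow> f a b > 0"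
  shows "minimax_dist S f u v \<ge> 0"
proof (cases "u = v")
  case False
  then show ?thesis using minimax_dist_pos[of S u v f] assms by simp
qed (simp add: minimax_dist_def)

lemma minimax_dist_sym:
  assumes "\<And>a b. a \<in> S \<Longrightarrow> b \<in> S \<Longrightarrow> f a b = f b a"
  shows "minimax_dist S f u v = minimax_dist S f v u"
proof -
  have "symp (threshold_rel S f t)" for t
    using assms unfolding threshold_rel_def symp_def by auto
  then have "minimax_levels S f u v = minimax_levels S f v u"
    unfolding minimax_levels_def using symp_rtranclp sympD by metis
  then show ?thesis unfolding minimax_dist_def by simp
qed

lemma threshold_rel_rtranclp_mono:
  "(threshold_rel S f t)\<^sup>*\<^sup>* u v \<Longrightarrow> t \<le> t' \<Longrightarrow> (threshold_rel S f t')\<^sup>*\<^sup>* u v"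
  by (rule mono_rtranclp[rule_format, of "threshold_rel S f t"]) (auto simp: threshold_rel_def)

text \<open>Two paths with bottlenecks \<open>s\<close> and \<open>t\<close> concatenate to a path with bottleneck \<open>max s t\<close>.\<close>
lemma minimax_dist_ultra:
  assumes "finite S" "u \<in> S" "v \<in> S" "w \<in> S"
    and pos: "\<And>a b. a \<in> S \<Longrightarrow> b \<in> S \<Longrightarrow> a \<noteq> b \<Longrightarrow> f a b > 0"
  shows "minimax_dist S f u w \<le> max (minimax_dist S f u v) (minimax_dist S f v w)"
proof (cases "u = w \<or> u = v \<or> v = w")
  case True
  then consider "u = w" | "u = v" | "v = w" by blast
  then show ?thesis
  proof cases
    case 1
    have "minimax_dist S f u v \<ge> 0" using minimax_dist_nonneg[of S u v f] assms(1-3) pos by simp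
    then show ?thesis using 1 by (simp add: minimax_dist_def[of S f w w])
  next
    case 2
    then show ?thesis by (simp add: le_max_iff_disj)
  next
    case 3
    then show ?thesis by (simp add: le_max_iff_disj minimax_dist_def[of S f w w])
  qed
next
  case False
  define s t where "s = minimax_dist S f u v" and "t = minimax_dist S f v w"
  have "u \<noteq> v" "v \<noteq> w" using False by auto
  then have s: "s \<in> minimax_levels S f u v" and t: "t \<in> minimax_levels S f v w"
    unfolding s_def t_def using minimax_dist_in_levels[OF assms(1)] assms(2-4) by simp_all
  have "(threshold_rel S f s)\<^sup>*\<^sup>* u v" "(threshold_rel S f t)\<^sup>*\<^sup>* v w"
    using s t unfolding minimax_levels_def by simp_all
  then have "(threshold_rel S f (max s t))\<^sup>*\<^sup>* u v" "(threshold_rel S f (max s t))\<^sup>*\<^sup>* v w"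
    by (simp_all add: threshold_rel_rtranclp_mono)
  then have "(threshold_rel S f (max s t))\<^sup>*\<^sup>* u w" by (rule rtranclp_trans)
  moreover have "max s t \<in> (\<lambda>(a, b). f a b) ` (S \<times> S)"
    using s t unfolding minimax_levels_def by (cases "s \<le> t") (simp_all add: max_def)
  ultimately have "max s t \<in> minimax_levels S f u w" unfolding minimax_levels_def by simp
  then show ?thesis unfolding s_def t_def using minimax_dist_le_level[OF assms(1)] False by simp
qed

lemma minimax_dist_antimono:
  assumes "finite S'" "S \<subseteq> S'" and eq: "\<And>a b. a \<in> S \<Longrightarrow> b \<in> S \<Longrightarrow> f' a b = f a b"
    and "u \<in> S" "v \<in> S"
  shows "minimax_dist S' f' u v \<le> minimax_dist S f u v"
proof (cases "u = v")
  case False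
  define t where "t = minimax_dist S f u v"
  have "finite S" using assms(1,2) finite_subset by blast
  then have t: "t \<in> minimax_levels S f u v"
    unfolding t_def by (rule minimax_dist_in_levels[OF _ assms(4,5) False])
  have "threshold_rel S' f' t a b" if "threshold_rel S f t a b" for a b
    using that assms(2) eq unfolding threshold_rel_def by auto
  then have "(threshold_rel S f t)\<^sup>*\<^sup>* u v \<longrightarrow> (threshold_rel S' f' t)\<^sup>*\<^sup>* u v"
    by (intro mono_rtranclp) simp
  then have "(threshold_rel S' f' t)\<^sup>*\<^sup>* u v" using t unfolding minimax_levels_def by simp
  moreover obtain a b where "a \<in> S" "b \<in> S" "t = f a b" using t unfolding minimax_levels_def by auto
  then have "t \<in> (\<lambda>(a, b). f' a b) ` (S' \<times> S')"
    using assms(2) eq by (intro image_eqI[of _ _ "(a, b)"]) auto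
  ultimately have "t \<in> minimax_levels S' f' u v" unfolding minimax_levels_def by simp
  then show ?thesis unfolding t_def using minimax_dist_le_level[OF assms(1)] False by simp
qed (simp add: minimax_dist_def)

lemma minimax_dist_ultrametric_on:
  assumes "finite S" "A \<subseteq> S"
    and sym: "\<And>a b. a \<in> S \<Longrightarrow> b \<in> S \<Longrightarrow> f a b = f b a"
    and pos: "\<And>a b. a \<in> S \<Longrightarrow> b \<in> S \<Longrightarrow> a \<noteq> b \<Longrightarrow> f a b > 0"
  shows "ultrametric_on A (minimax_dist S f)"
  unfolding ultrametric_on_def
proof (intro conjI ballI)
  fix x y z assume "x \<in> A" "y \<in> A" "z \<in> A"
  then have S: "x \<in> S" "y \<in> S" "z \<in> S" using assms(2) by auto
  show "minimax_dist S f x y = 0 \<longleftrightarrow> x = y"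
    using minimax_dist_pos[of S x y f] assms(1) S pos by (auto simp: minimax_dist_def)
  show "minimax_dist S f x y = minimax_dist S f y x" by (rule minimax_dist_sym[OF sym])
  show "minimax_dist S f x z \<le> max (minimax_dist S f x y) (minimax_dist S f y z)"
    by (rule minimax_dist_ultra[OF assms(1) S pos])
qed

lemma rtrancl_path_dist_le_length:
  assumes "is_metric d" "rtrancl_path R a xs b" and edge: "\<And>x y. R x y \<Longrightarrow> d x y \<le> c"
  shows "d a b \<le> real (length xs) * c"
  using assms(2)
proof (induction rule: rtrancl_path.induct)
  case (base x)
  then show ?case using is_metricD(1)[OF assms(1)] by simp
next
  case (step x y ys z)
  have "d x z \<le> d x y + d y z" by (rule is_metricD(3)[OF assms(1)])
  also have "\<dots> \<le> c + real (length ys) * c" using step edge by (meson add_mono)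
  finally show ?case by (simp add: algebra_simps)
qed

lemma rtrancl_path_dist_le_weights:
  assumes "is_metric d" "rtrancl_path R a xs b" "distinct (a # xs)"
    and edge: "\<And>x y. R x y \<Longrightarrow> d x y \<le> t * (h x + h y)" and "\<And>x. h x \<ge> 0" "t \<ge> 0"
  shows "d a b \<le> t * (h a + 2 * sum h (set xs))"
  using assms(2,3)
proof (induction rule: rtrancl_path.induct)
  case (base x)
  then show ?case using is_metricD(1)[OF assms(1)] assms(5,6) by simp
next
  case (step x y ys z)
  have "d x z \<le> d x y + d y z" by (rule is_metricD(3)[OF assms(1)])
  also have "\<dots> \<le> t * (h x + h y) + t * (h y + 2 * sum h (set ys))"
    using step edge by (meson add_mono distinct.simps(2))
  also have "\<dots> = t * (h x + 2 * sum h (set (y # ys)))"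
    using step(4) by (simp add: algebra_simps)
  finally show ?case .
qed

text \<open>A minimax path between distinct points of \<open>S\<close> has at most \<open>card S - 1\<close> steps.\<close>
lemma minimax_dist_scaled_ge:
  assumes "finite S" "is_metric d" "u \<in> S" "v \<in> S" "c \<ge> real (card S) - 1"
  shows "d u v \<le> minimax_dist S (\<lambda>a b. c * d a b) u v"
proof (cases "u = v")
  case True
  then show ?thesis using is_metricD(1)[OF assms(2)] by (simp add: minimax_dist_def)
next
  case False
  define t where "t = minimax_dist S (\<lambda>a b. c * d a b) u v"
  have "card {u, v} \<le> card S" using assms(1,3,4) by (intro card_mono) auto
  then have "c \<ge> 1" using False assms(5) by simp
  then have "c * d a b > 0" if "a \<noteq> b" for a b
    using is_metricD(5)[OF assms(2) that] by simp
  then have "t > 0" unfolding t_def by (rule minimax_dist_pos[OF assms(1,3,4) False])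
  obtain xs where path: "rtrancl_path (threshold_rel S (\<lambda>a b. c * d a b) t) u xs v"
    and "distinct (u # xs)"
    using minimax_path[OF assms(1,3,4) False] unfolding t_def by metis
  have "set (u # xs) \<subseteq> S" using rtrancl_path_threshold_subset[OF path] assms(3) by simp
  then have "card (set (u # xs)) \<le> card S" by (rule card_mono[OF assms(1)])
  then have "length xs + 1 \<le> card S" using distinct_card[OF \<open>distinct (u # xs)\<close>] by simp
  then have len: "real (length xs) \<le> c" using assms(5) by simp
  have "d x y \<le> t / c" if "threshold_rel S (\<lambda>a b. c * d a b) t x y" for x y
    using that \<open>c \<ge> 1\<close> unfolding threshold_rel_def by (simp add: le_divide_eq mult.commute)
  then have "d u v \<le> real (length xs) * (t / c)"
    by (rule rtrancl_path_dist_le_length[OF assms(2) path])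
  also have "\<dots> \<le> c * (t / c)" using len \<open>t > 0\<close> by (intro mult_right_mono) auto
  also have "\<dots> = t" using \<open>c \<ge> 1\<close> by simp
  finally show ?thesis unfolding t_def .
qed

text \<open>Along a minimax path each step \<open>x y\<close> has length at most \<open>t / (2 min (w x) (w y))\<close>,
  which is charged to both endpoints as \<open>t / 2 * (1 / w x + 1 / w y)\<close>; as the path is simple,
  each point is charged at most twice.\<close>
lemma minimax_dist_weighted_ge:
  assumes "finite S" "is_metric d" "u \<in> S" "v \<in> S"
    and w: "\<And>x. w x > 0" and sum_le: "(\<Sum>x\<in>S. 1 / w x) \<le> 1"
    and f: "\<And>a b. a \<in> S \<Longrightarrow> b \<in> S \<Longrightarrow> 2 * min (w a) (w b) * d a b \<le> f a b"
  shows "d u v \<le> minimax_dist S f u v"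
proof (cases "u = v")
  case True
  then show ?thesis using is_metricD(1)[OF assms(2)] by (simp add: minimax_dist_def)
next
  case False
  define t where "t = minimax_dist S f u v"
  obtain a b where ab: "a \<in> S" "b \<in> S" "t = f a b"
    using minimax_dist_in_levels[OF assms(1,3,4) False, of f] unfolding t_def minimax_levels_def by auto
  have "0 \<le> 2 * min (w a) (w b) * d a b" using w[of a] w[of b] is_metricD(4)[OF assms(2)] by simp
  then have "t \<ge> 0" using f[OF ab(1,2)] ab(3) by linarith
  obtain xs where path: "rtrancl_path (threshold_rel S f t) u xs v" and "distinct (u # xs)"
    using minimax_path[OF assms(1,3,4) False] unfolding t_def by metis
  have "set (u # xs) \<subseteq> S" using rtrancl_path_threshold_subset[OF path] assms(3) by simp
  define h where "h x = 1 / w x" for x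
  have h: "h x \<ge> 0" for x unfolding h_def using w[of x] by simp
  have "d x y \<le> t / 2 * (h x + h y)" if "threshold_rel S f t x y" for x y
  proof -
    define m where "m = min (w x) (w y)"
    have "m > 0" unfolding m_def using w[of x] w[of y] by simp
    have "2 * m * d x y \<le> t" using that f[of x y] unfolding threshold_rel_def m_def by simp
    then have "d x y \<le> t / 2 * (1 / m)" using \<open>m > 0\<close> by (simp add: field_simps)
    also have "1 / m \<le> h x + h y"
      using h[of x] h[of y] unfolding h_def m_def by (cases "w x \<le> w y") (simp_all add: min_def)
    then have "t / 2 * (1 / m) \<le> t / 2 * (h x + h y)" using \<open>t \<ge> 0\<close> by (intro mult_left_mono) auto
    finally show ?thesis .
  qed
  then have "d u v \<le> t / 2 * (h u + 2 * sum h (set xs))"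
    by (rule rtrancl_path_dist_le_weights[OF assms(2) path \<open>distinct (u # xs)\<close>, where t = "t / 2"])
      (use h \<open>t \<ge> 0\<close> in auto)
  also have "\<dots> \<le> t * sum h (set (u # xs))"
    using \<open>distinct (u # xs)\<close> mult_nonneg_nonneg[OF \<open>t \<ge> 0\<close> h[of u]] by (simp add: field_simps)
  also have "\<dots> \<le> t * sum h S"
    using sum_mono2[OF assms(1) \<open>set (u # xs) \<subseteq> S\<close>, of h] h \<open>t \<ge> 0\<close> by (intro mult_left_mono) auto
  also have "\<dots> \<le> t" using sum_le \<open>t \<ge> 0\<close> mult_left_mono[of _ 1 t] unfolding h_def by simp
  finally show ?thesis unfolding t_def .
qed

section \<open>Online monotone embeddings\<close>

definition arrived :: "('a \<times> bool) list \<Rightarrow> 'a set" where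
  "arrived \<sigma> = {v. (v, True) \<in> set \<sigma>}"

definition arrivals :: "'a list \<Rightarrow> ('a \<times> bool) list" where
  "arrivals xs = map (\<lambda>x. (x, True)) xs"

lemma finite_arrived: "finite (arrived \<sigma>)"
proof -
  have "arrived \<sigma> = fst ` set (filter snd \<sigma>)" unfolding arrived_def by force
  then show ?thesis by simp
qed

lemma card_arrived_le: "\<sigma> \<in> upto n \<Longrightarrow> card (arrived \<sigma>) \<le> n"
proof -
  have "arrived \<sigma> = fst ` set (filter snd \<sigma>)" unfolding arrived_def by force
  then have "card (arrived \<sigma>) \<le> length (filter snd \<sigma>)"
    using card_image_le card_length order_trans by (metis List.finite_set)
  then show "\<sigma> \<in> upto n \<Longrightarrow> card (arrived \<sigma>) \<le> n" unfolding upto_def by simp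
qed

lemma arrived_snoc: "arrived (\<sigma> @ [(v, b)]) = (if b then insert v (arrived \<sigma>) else arrived \<sigma>)"
  unfolding arrived_def by auto

lemma arrived_butlast_subset: "arrived (butlast \<sigma>) \<subseteq> arrived \<sigma>"
  unfolding arrived_def using in_set_butlastD by fastforce

lemma alive_snoc: "alive (\<sigma> @ [(v, b)]) = (if b then insert v (alive \<sigma>) else alive \<sigma> - {v})"
  unfolding alive_def by simp

lemma alive_subset_arrived: "alive \<sigma> \<subseteq> arrived \<sigma>"
proof (induction \<sigma> rule: rev_induct)
  case Nil
  then show ?case by (simp add: alive_def)
next
  case (snoc x \<sigma>)
  then show ?case by (cases x) (auto simp: alive_snoc arrived_snoc)
qed

lemma alive_append_arrivals: "alive (\<sigma> @ arrivals xs) = alive \<sigma> \<union> set xs"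
proof (induction xs rule: rev_induct)
  case (snoc x xs)
  then show ?case unfolding arrivals_def using alive_snoc[of "\<sigma> @ arrivals xs" x True]
    by (simp add: arrivals_def)
qed (simp add: arrivals_def)

lemma alive_arrivals: "alive (arrivals xs) = set xs"
  using alive_append_arrivals[of "[]" xs] by (simp add: alive_def)

lemma arrivals_in_upto: "arrivals xs \<in> upto n \<longleftrightarrow> length xs \<le> n"
  unfolding arrivals_def upto_def by (simp add: comp_def)

definition arrival_rank :: "('a \<times> bool) list \<Rightarrow> 'a \<Rightarrow> nat" where
  "arrival_rank \<sigma> v = card (arrived (takeWhile (\<lambda>q. q \<noteq> (v, True)) \<sigma>))"

lemma arrival_rank_append: "v \<in> arrived \<sigma> \<Longrightarrow> arrival_rank (\<sigma> @ \<tau>) v = arrival_rank \<sigma> v"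
  unfolding arrival_rank_def arrived_def by (subst takeWhile_append1) auto

lemma bij_betw_arrival_rank: "bij_betw (arrival_rank \<sigma>) (arrived \<sigma>) {..<card (arrived \<sigma>)}"
proof (induction \<sigma> rule: rev_induct)
  case Nil
  then show ?case by (simp add: arrived_def bij_betw_def)
next
  case (snoc x \<sigma>)
  obtain v b where x: "x = (v, b)" by (cases x)
  have old: "bij_betw (arrival_rank (\<sigma> @ [x])) (arrived \<sigma>) {..<card (arrived \<sigma>)}"
    using snoc bij_betw_cong[of "arrived \<sigma>" "arrival_rank (\<sigma> @ [x])" "arrival_rank \<sigma>"]
    by (simp add: arrival_rank_append)
  show ?case
  proof (cases "b \<and> v \<notin> arrived \<sigma>")
    case True
    then have "takeWhile (\<lambda>q. q \<noteq> (v, True)) (\<sigma> @ [x]) = \<sigma>"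
      unfolding x arrived_def by (subst takeWhile_append2) auto
    then have "arrival_rank (\<sigma> @ [x]) v = card (arrived \<sigma>)" by (simp add: arrival_rank_def)
    moreover have "bij_betw (arrival_rank (\<sigma> @ [x])) (arrived \<sigma> \<union> {v})
        ({..<card (arrived \<sigma>)} \<union> {arrival_rank (\<sigma> @ [x]) v})"
      using True calculation by (intro notIn_Un_bij_betw[OF _ _ old]) auto
    ultimately have "bij_betw (arrival_rank (\<sigma> @ [x])) (arrived \<sigma> \<union> {v})
        ({..<card (arrived \<sigma>)} \<union> {card (arrived \<sigma>)})" by simp
    moreover have "{..<card (arrived \<sigma>)} \<union> {card (arrived \<sigma>)} = {..<Suc (card (arrived \<sigma>))}" by auto
    ultimately show ?thesis using True finite_arrived[of \<sigma>] unfolding x by (simp add: arrived_snoc)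
  next
    case False
    then have "arrived (\<sigma> @ [x]) = arrived \<sigma>" unfolding x by (auto simp: arrived_snoc)
    then show ?thesis using old by simp
  qed
qed

definition minimax_embedding ::
  "(('a \<times> bool) list \<Rightarrow> 'a \<Rightarrow> 'a \<Rightarrow> real) \<Rightarrow> ('a \<times> bool) list \<Rightarrow> 'a \<Rightarrow> 'a \<Rightarrow> real" where
  "minimax_embedding F \<sigma> = minimax_dist (arrived \<sigma>) (F \<sigma>)"

lemma online_monotone_embeddingD:
  assumes "online_monotone_embedding d S E" "\<sigma> \<in> S" "\<sigma> \<noteq> []"
  shows "in_HSTs (alive \<sigma>) (E \<sigma>)"
    and "u \<in> alive \<sigma> \<Longrightarrow> v \<in> alive \<sigma> \<Longrightarrow> d u v \<le> E \<sigma> u v"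
    and "u \<in> alive \<sigma> \<inter> alive (butlast \<sigma>) \<Longrightarrow> v \<in> alive \<sigma> \<inter> alive (butlast \<sigma>) \<Longrightarrow>
      E \<sigma> u v \<le> E (butlast \<sigma>) u v"
  using assms unfolding online_monotone_embedding_def by blast+

lemma minimax_embedding_online_monotone:
  assumes sym: "\<And>\<sigma> a b. \<sigma> \<in> S \<Longrightarrow> a \<in> arrived \<sigma> \<Longrightarrow> b \<in> arrived \<sigma> \<Longrightarrow> F \<sigma> a b = F \<sigma> b a"
    and pos: "\<And>\<sigma> a b. \<sigma> \<in> S \<Longrightarrow> a \<in> arrived \<sigma> \<Longrightarrow> b \<in> arrived \<sigma> \<Longrightarrow> a \<noteq> b \<Longrightarrow> F \<sigma> a b > 0"
    and stable: "\<And>\<sigma> a b. \<sigma> \<in> S \<Longrightarrow> a \<in> arrived (butlast \<sigma>) \<Longrightarrow> b \<in> arrived (butlast \<sigma>) \<Longrightarrow>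
      F \<sigma> a b = F (butlast \<sigma>) a b"
    and noncontracting: "\<And>\<sigma> u v. \<sigma> \<in> S \<Longrightarrow> u \<in> arrived \<sigma> \<Longrightarrow> v \<in> arrived \<sigma> \<Longrightarrow>
      d u v \<le> minimax_embedding F \<sigma> u v"
  shows "online_monotone_embedding d S (minimax_embedding F)"
  unfolding online_monotone_embedding_def
proof (intro ballI impI conjI)
  fix \<sigma> assume "\<sigma> \<in> S"
  have "ultrametric_on (alive \<sigma>) (minimax_dist (arrived \<sigma>) (F \<sigma>))"
    by (rule minimax_dist_ultrametric_on[OF finite_arrived alive_subset_arrived
          sym[OF \<open>\<sigma> \<in> S\<close>] pos[OF \<open>\<sigma> \<in> S\<close>]])
  then have "is_muHST 1 (alive \<sigma>) (minimax_embedding F \<sigma>)"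
    unfolding minimax_embedding_def
    by (intro finite_ultrametric_is_1HST finite_subset[OF alive_subset_arrived finite_arrived])
  then show "in_HSTs (alive \<sigma>) (minimax_embedding F \<sigma>)" unfolding in_HSTs_def by blast
next
  fix \<sigma> u v assume "\<sigma> \<in> S" "u \<in> alive \<sigma>" "v \<in> alive \<sigma>"
  then have "u \<in> arrived \<sigma>" "v \<in> arrived \<sigma>" using alive_subset_arrived[of \<sigma>] by auto
  then show "d u v \<le> minimax_embedding F \<sigma> u v" by (rule noncontracting[OF \<open>\<sigma> \<in> S\<close>])
next
  fix \<sigma> u v assume "\<sigma> \<in> S" "u \<in> alive \<sigma> \<inter> alive (butlast \<sigma>)" "v \<in> alive \<sigma> \<inter> alive (butlast \<sigma>)"
  then have u: "u \<in> arrived (butlast \<sigma>)" and v: "v \<in> arrived (butlast \<sigma>)"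
    using alive_subset_arrived[of "butlast \<sigma>"] by auto
  have eq: "F \<sigma> a b = F (butlast \<sigma>) a b"
    if "a \<in> arrived (butlast \<sigma>)" "b \<in> arrived (butlast \<sigma>)" for a b
    using stable[OF \<open>\<sigma> \<in> S\<close> that] .
  show "minimax_embedding F \<sigma> u v \<le> minimax_embedding F (butlast \<sigma>) u v"
    unfolding minimax_embedding_def
    by (rule minimax_dist_antimono[OF finite_arrived arrived_butlast_subset eq u v])
qed

lemma minimax_embedding_distortion:
  assumes "is_metric d"
    and "\<And>\<sigma> a b. \<sigma> \<in> S \<Longrightarrow> a \<in> arrived \<sigma> \<Longrightarrow> b \<in> arrived \<sigma> \<Longrightarrow> a \<noteq> b \<Longrightarrow> F \<sigma> a b \<le> c * d a b"
  shows "has_distortion d S (minimax_embedding F) c"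
  unfolding has_distortion_def minimax_embedding_def
proof (intro ballI)
  fix \<sigma> u v assume "\<sigma> \<in> S" "u \<in> alive \<sigma>" "v \<in> alive \<sigma>"
  then have "u \<in> arrived \<sigma>" "v \<in> arrived \<sigma>" using alive_subset_arrived[of \<sigma>] by auto
  show "minimax_dist (arrived \<sigma>) (F \<sigma>) u v \<le> c * d u v"
  proof (cases "u = v")
    case False
    have "minimax_dist (arrived \<sigma>) (F \<sigma>) u v \<le> F \<sigma> u v"
      by (rule minimax_dist_le[OF finite_arrived \<open>u \<in> arrived \<sigma>\<close> \<open>v \<in> arrived \<sigma>\<close> False])
    also have "\<dots> \<le> c * d u v"
      by (rule assms(2)[OF \<open>\<sigma> \<in> S\<close> \<open>u \<in> arrived \<sigma>\<close> \<open>v \<in> arrived \<sigma>\<close> False])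
    finally show ?thesis .
  qed (simp add: minimax_dist_def is_metricD(1)[OF assms(1)])
qed

lemma ultrametric_chain:
  fixes U :: "'a \<Rightarrow> 'a \<Rightarrow> real"
  assumes ultra: "\<And>x y z. x \<in> L \<Longrightarrow> y \<in> L \<Longrightarrow> z \<in> L \<Longrightarrow> U x z \<le> max (U x y) (U y z)"
    and y: "\<And>i. i \<le> m \<Longrightarrow> y i \<in> L" and step: "\<And>i. i < m \<Longrightarrow> U (y i) (y (Suc i)) \<le> B"
    and "0 < m"
  shows "U (y 0) (y m) \<le> B"
proof -
  have "U (y 0) (y (Suc i)) \<le> B" if "i < m" for i
    using that
  proof (induction i)
    case 0
    then show ?case using step by simp
  next
    case (Suc i)
    have "U (y 0) (y (Suc (Suc i))) \<le> max (U (y 0) (y (Suc i))) (U (y (Suc i)) (y (Suc (Suc i))))"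
      using Suc.prems y by (intro ultra) auto
    then show ?case using Suc step[of "Suc i"] by simp
  qed
  from this[of "m - 1"] show ?thesis using \<open>0 < m\<close> by simp
qed

lemma alive_arrivals_upt: "alive (arrivals (map y [0..<Suc j])) = y ` {..j}"
  unfolding alive_arrivals set_map set_upt by (simp add: atLeast0LessThan lessThan_Suc_atMost)

lemma online_monotone_embedding_arrivals_antitone:
  assumes E: "online_monotone_embedding d S E"
    and S: "\<And>j. 0 < j \<Longrightarrow> j \<le> m \<Longrightarrow> arrivals (map y [0..<Suc j]) \<in> S"
    and "a \<le> j" "b \<le> j" "j \<le> m"
  shows "E (arrivals (map y [0..<Suc m])) (y a) (y b) \<le> E (arrivals (map y [0..<Suc j])) (y a) (y b)"
proof -
  define \<sigma> where "\<sigma> i = arrivals (map y [0..<Suc i])" for i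
  have butlast: "butlast (\<sigma> (Suc i)) = \<sigma> i" and nonempty: "\<sigma> (Suc i) \<noteq> []" for i
    unfolding \<sigma>_def arrivals_def by (simp_all add: butlast_append)
  have "E (\<sigma> (j + k)) (y a) (y b) \<le> E (\<sigma> j) (y a) (y b)" if "j + k \<le> m" for k
    using that
  proof (induction k)
    case (Suc k)
    have "y a \<in> alive (\<sigma> (j + k))" "y b \<in> alive (\<sigma> (j + k))"
      "y a \<in> alive (\<sigma> (Suc (j + k)))" "y b \<in> alive (\<sigma> (Suc (j + k)))"
      unfolding \<sigma>_def alive_arrivals_upt using assms(3,4) by auto
    moreover have "\<sigma> (Suc (j + k)) \<in> S" using S[of "Suc (j + k)"] Suc.prems by (simp add: \<sigma>_def)
    ultimately have "E (\<sigma> (Suc (j + k))) (y a) (y b) \<le> E (\<sigma> (j + k)) (y a) (y b)"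
      using online_monotone_embeddingD(3)[OF E _ nonempty, of "j + k"] butlast by simp
    then show ?case using Suc by simp
  qed simp
  from this[of "m - j"] show ?thesis using assms(5) unfolding \<sigma>_def by simp
qed

lemma online_monotone_embedding_arrival_chain:
  fixes y :: "nat \<Rightarrow> 'a"
  assumes E: "online_monotone_embedding d S E"
    and S: "\<And>j. 0 < j \<Longrightarrow> j \<le> m \<Longrightarrow> arrivals (map y [0..<Suc j]) \<in> S"
    and step: "\<And>i. i < m \<Longrightarrow> E (arrivals (map y [0..<Suc (Suc i)])) (y i) (y (Suc i)) \<le> B"
    and "0 < m"
  shows "d (y 0) (y m) \<le> B"
proof -
  define \<sigma> where "\<sigma> = arrivals (map y [0..<Suc m])"
  have "\<sigma> \<in> S" "\<sigma> \<noteq> []" using S[OF \<open>0 < m\<close>] unfolding \<sigma>_def arrivals_def by auto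
  then obtain \<mu> where "\<mu> \<ge> 1" "is_muHST \<mu> (alive \<sigma>) (E \<sigma>)"
    using online_monotone_embeddingD(1)[OF E] unfolding in_HSTs_def by blast
  have "E \<sigma> (y 0) (y m) \<le> B"
  proof (rule ultrametric_chain[where L = "alive \<sigma>"])
    show "E \<sigma> x z \<le> max (E \<sigma> x y) (E \<sigma> y z)" if "x \<in> alive \<sigma>" "y \<in> alive \<sigma>" "z \<in> alive \<sigma>"
      for x y z
      by (rule muHST_ultrametric(2)[OF \<open>is_muHST \<mu> (alive \<sigma>) (E \<sigma>)\<close> \<open>\<mu> \<ge> 1\<close> that])
    show "y i \<in> alive \<sigma>" if "i \<le> m" for i unfolding \<sigma>_def alive_arrivals_upt using that by simp
    show "E \<sigma> (y i) (y (Suc i)) \<le> B" if "i < m" for i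
      using order_trans[OF online_monotone_embedding_arrivals_antitone[OF E S,
          where a = i and b = "Suc i" and j = "Suc i"] step[OF that]] that
      unfolding \<sigma>_def by simp
  qed fact
  moreover have "d (y 0) (y m) \<le> E \<sigma> (y 0) (y m)"
    using online_monotone_embeddingD(2)[OF E \<open>\<sigma> \<in> S\<close> \<open>\<sigma> \<noteq> []\<close>] unfolding \<sigma>_def alive_arrivals_upt
    by simp
  ultimately show ?thesis by simp
qed

section \<open>Distortion \<open>n - 1\<close> for at most \<open>n\<close> points\<close>

lemma is_metric_dist: "is_metric (dist :: 'a::metric_space \<Rightarrow> 'a \<Rightarrow> real)"
  unfolding is_metric_def by (simp add: dist_commute dist_triangle)

lemma card_arrived_ge_2: "a \<in> arrived \<sigma> \<Longrightarrow> b \<in> arrived \<sigma> \<Longrightarrow> a \<noteq> b \<Longrightarrow> card (arrived \<sigma>) \<ge> 2"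
  using card_mono[OF finite_arrived, of "{a, b}" \<sigma>] by simp

lemma online_embedding_upto_distortion:
  assumes "is_metric d"
  shows "\<exists>E. online_monotone_embedding d (upto n) E \<and> has_distortion d (upto n) E (real n - 1)"
proof -
  define F where "F \<sigma> a b = (real n - 1) * d a b" for \<sigma> :: "('a \<times> bool) list" and a b
  have "online_monotone_embedding d (upto n) (minimax_embedding F)"
  proof (rule minimax_embedding_online_monotone)
    show "F \<sigma> a b = F \<sigma> b a" for \<sigma> a b unfolding F_def using is_metricD(2)[OF assms] by simp
    show "F \<sigma> a b > 0" if "\<sigma> \<in> upto n" "a \<in> arrived \<sigma>" "b \<in> arrived \<sigma>" "a \<noteq> b" for \<sigma> a b
      using card_arrived_ge_2[OF that(2-4)] card_arrived_le[OF that(1)] is_metricD(5)[OF assms that(4)]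
      unfolding F_def by simp
    show "F \<sigma> a b = F (butlast \<sigma>) a b" for \<sigma> a b unfolding F_def ..
    show "d u v \<le> minimax_embedding F \<sigma> u v"
      if "\<sigma> \<in> upto n" "u \<in> arrived \<sigma>" "v \<in> arrived \<sigma>" for \<sigma> u v
      unfolding minimax_embedding_def F_def
      using minimax_dist_scaled_ge[OF finite_arrived assms that(2,3)] card_arrived_le[OF that(1)] by simp
  qed
  moreover have "has_distortion d (upto n) (minimax_embedding F) (real n - 1)"
    by (rule minimax_embedding_distortion[OF assms]) (simp add: F_def)
  ultimately show ?thesis by blast
qed

lemma no_online_embedding_upto_below:
  fixes E :: "(real \<times> bool) list \<Rightarrow> real \<Rightarrow> real \<Rightarrow> real"
  assumes "n \<ge> 2" "c < real n - 1" "online_monotone_embedding dist (upto n) E"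
  shows "\<not> has_distortion dist (upto n) E c"
proof
  assume distortion: "has_distortion dist (upto n) E c"
  have "dist (real 0) (real (n - 1)) \<le> c"
  proof (rule online_monotone_embedding_arrival_chain[OF assms(3), where y = real and m = "n - 1"])
    show "arrivals (map real [0..<Suc j]) \<in> upto n" if "j \<le> n - 1" for j
      using that assms(1) by (simp add: arrivals_in_upto)
    show "E (arrivals (map real [0..<Suc (Suc i)])) (real i) (real (Suc i)) \<le> c" if "i < n - 1" for i
    proof -
      have "arrivals (map real [0..<Suc (Suc i)]) \<in> upto n" using that by (simp add: arrivals_in_upto)
      moreover have "real i \<in> alive (arrivals (map real [0..<Suc (Suc i)]))"
        "real (Suc i) \<in> alive (arrivals (map real [0..<Suc (Suc i)]))"
        by (auto simp: alive_arrivals)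
      ultimately show ?thesis using distortion unfolding has_distortion_def dist_real_def by fastforce
    qed
  qed (use assms(1) in simp)
  then show False using assms(1,2) by (simp add: dist_real_def)
qed

section \<open>Distortion \<open>O(n log n (log log n)\<^sup>2)\<close> without knowing \<open>n\<close>\<close>

lemma ln_bounds_ge_256:
  assumes "(x::real) \<ge> 256"
  shows "ln x \<ge> 4" "ln (ln x) \<ge> 1"
proof -
  have "ln (2::real) \<ge> 1/2" using ln_le_minus_one[of "1/2::real"] by (simp add: ln_div)
  moreover have "ln (256::real) = 8 * ln 2" and "ln (4::real) = 2 * ln 2"
    using ln_realpow[of "2::real" 8] ln_realpow[of "2::real" 2] by simp_all
  moreover have "ln (256::real) \<le> ln x" using assms by simp
  ultimately show "ln x \<ge> 4" by simp
  then have "ln (4::real) \<le> ln (ln x)" by simp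
  with \<open>ln 4 = 2 * ln 2\<close> \<open>ln 2 \<ge> 1/2\<close> show "ln (ln x) \<ge> 1" by simp
qed

lemma ln_diff_bounds:
  assumes "(a::real) > 0" "b > 0"
  shows "(a - b) / a \<le> ln a - ln b" "ln a - ln b \<le> (a - b) / b"
proof -
  have "ln (b / a) \<le> b / a - 1" "ln (a / b) \<le> a / b - 1"
    using assms by (simp_all add: ln_le_minus_one)
  then show "(a - b) / a \<le> ln a - ln b" "ln a - ln b \<le> (a - b) / b"
    using assms by (simp_all add: ln_div diff_divide_distrib)
qed

text \<open>The weight of the point of arrival rank \<open>m\<close>. The offset makes \<open>ln (ln _)\<close> at least \<open>1\<close>,
  and \<open>1 / rank_weight\<close> telescopes against \<open>1 / ln (ln _)\<close>, so the inverse weights sum to at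
  most \<open>1\<close>.\<close>
definition rank_weight :: "nat \<Rightarrow> real" where
  "rank_weight m = (real m + 257) * ln (real m + 257) * (ln (ln (real m + 257)))\<^sup>2"

lemma rank_weight_pos: "rank_weight m > 0"
  using ln_bounds_ge_256[of "real m + 257"] unfolding rank_weight_def by simp

lemma inverse_rank_weight_le:
  "1 / rank_weight m \<le> 1 / ln (ln (real m + 256)) - 1 / ln (ln (real m + 257))"
proof -
  define x y where "x = real m + 256" and "y = real m + 257"
  have lx: "ln x \<ge> 4" "ln (ln x) \<ge> 1" and ly: "ln y \<ge> 4" "ln (ln y) \<ge> 1"
    using ln_bounds_ge_256[of x] ln_bounds_ge_256[of y] unfolding x_def y_def by simp_all
  have "1 / y \<le> ln y - ln x" using ln_diff_bounds(1)[of y x] unfolding x_def y_def by simp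
  then have "1 / y / ln y \<le> (ln y - ln x) / ln y" using ly by (intro divide_right_mono) auto
  also have "\<dots> \<le> ln (ln y) - ln (ln x)" using ln_diff_bounds(1)[of "ln y" "ln x"] lx ly by simp
  finally have d: "1 / (y * ln y) \<le> ln (ln y) - ln (ln x)" by simp
  have "ln (ln x) \<le> ln (ln y)" using lx unfolding x_def y_def by simp
  have "1 / rank_weight m = 1 / (y * ln y * ln (ln y) * ln (ln y))"
    unfolding rank_weight_def y_def by (simp add: power2_eq_square mult.assoc)
  also have "\<dots> \<le> 1 / (y * ln y * ln (ln x) * ln (ln y))"
    using \<open>ln (ln x) \<le> ln (ln y)\<close> lx ly unfolding x_def y_def
    by (intro divide_left_mono mult_left_mono mult_right_mono) auto
  also have "\<dots> = 1 / (y * ln y) / (ln (ln x) * ln (ln y))" by (simp add: mult.assoc)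
  also have "\<dots> \<le> (ln (ln y) - ln (ln x)) / (ln (ln x) * ln (ln y))"
    using d lx ly by (intro divide_right_mono) auto
  also have "\<dots> = 1 / ln (ln x) - 1 / ln (ln y)" using lx ly by (simp add: field_simps)
  finally show ?thesis unfolding x_def y_def .
qed

lemma sum_inverse_rank_weight_le_1: "(\<Sum>m<M. 1 / rank_weight m) \<le> 1"
proof -
  define g where "g m = 1 / ln (ln (real m + 256))" for m
  have "(\<Sum>m<M. 1 / rank_weight m) \<le> (\<Sum>m<M. g m - g (Suc m))"
    using inverse_rank_weight_le unfolding g_def by (intro sum_mono) (simp add: add.commute)
  also have "\<dots> = g 0 - g M" by (rule sum_lessThan_telescope')
  also have "\<dots> \<le> 1"
  proof -
    have "g M \<ge> 0" unfolding g_def using ln_bounds_ge_256[of "real M + 256"] by simp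
    moreover have "g 0 \<le> 1" unfolding g_def using ln_bounds_ge_256[of 256] by simp
    ultimately show ?thesis by simp
  qed
  finally show ?thesis .
qed

lemma rank_weight_le:
  assumes "m < n" "n \<ge> 256"
  shows "2 * rank_weight m \<le> 32 * real n * ln (real n) * (ln (ln (real n)))\<^sup>2"
proof -
  define x y where "x = real m + 257" and "y = 2 * real n"
  have "x \<le> y" "x \<ge> 256" "real n \<ge> 256" using assms unfolding x_def y_def by auto
  have lx: "ln x \<ge> 4" "ln (ln x) \<ge> 1" and ln: "ln (real n) \<ge> 4" "ln (ln (real n)) \<ge> 1"
    using ln_bounds_ge_256 \<open>x \<ge> 256\<close> \<open>real n \<ge> 256\<close> by auto
  have "ln x \<le> ln y" using \<open>x \<le> y\<close> \<open>x \<ge> 256\<close> by simp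
  have ly: "ln y = ln 2 + ln (real n)" unfolding y_def using \<open>real n \<ge> 256\<close> by (simp add: ln_mult)
  have "ln (2::real) \<le> 1" using ln_le_minus_one[of "2::real"] by simp
  moreover have "ln (2::real) \<ge> 0" by simp
  ultimately have ly2: "ln y \<le> 2 * ln (real n)" using ly ln by simp
  have "ln (ln y) \<le> ln (2 * ln (real n))" using ly2 lx \<open>ln x \<le> ln y\<close> by simp
  also have "\<dots> = ln 2 + ln (ln (real n))" using ln by (simp add: ln_mult)
  also have "\<dots> \<le> 2 * ln (ln (real n))" using \<open>ln 2 \<le> 1\<close> ln by simp
  finally have lly: "ln (ln y) \<le> 2 * ln (ln (real n))" .
  have "ln (ln x) \<le> ln (ln y)" using \<open>ln x \<le> ln y\<close> lx by simp
  have "rank_weight m = x * ln x * (ln (ln x))\<^sup>2" unfolding rank_weight_def x_def y_def by simp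
  also have "\<dots> \<le> y * ln y * (ln (ln y))\<^sup>2"
    using \<open>x \<le> y\<close> \<open>x \<ge> 256\<close> lx \<open>ln x \<le> ln y\<close> \<open>ln (ln x) \<le> ln (ln y)\<close>
    by (intro mult_mono power_mono) auto
  also have "\<dots> \<le> (2 * real n) * (2 * ln (real n)) * (2 * ln (ln (real n)))\<^sup>2"
    using ly2 lly lx \<open>ln x \<le> ln y\<close> \<open>ln (ln x) \<le> ln (ln y)\<close> \<open>real n \<ge> 256\<close> unfolding y_def
    by (intro mult_mono power_mono) auto
  finally show ?thesis by (simp add: power2_eq_square)
qed

lemma arrival_rank_butlast:
  assumes "a \<in> arrived (butlast \<sigma>)"
  shows "arrival_rank \<sigma> a = arrival_rank (butlast \<sigma>) a"
proof -
  have "\<sigma> \<noteq> []" using assms by (auto simp: arrived_def)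
  then have "arrival_rank \<sigma> a = arrival_rank (butlast \<sigma> @ [last \<sigma>]) a" by simp
  also have "\<dots> = arrival_rank (butlast \<sigma>) a" by (rule arrival_rank_append[OF assms])
  finally show ?thesis .
qed

lemma sum_inverse_rank_weight_arrived_le_1:
  "(\<Sum>x\<in>arrived \<sigma>. 1 / rank_weight (arrival_rank \<sigma> x)) \<le> 1"
proof -
  have "(\<Sum>x\<in>arrived \<sigma>. 1 / rank_weight (arrival_rank \<sigma> x)) = (\<Sum>m<card (arrived \<sigma>). 1 / rank_weight m)"
    using sum.reindex_bij_betw[OF bij_betw_arrival_rank[of \<sigma>], of "\<lambda>m. 1 / rank_weight m"] by simp
  then show ?thesis using sum_inverse_rank_weight_le_1 by simp
qed

lemma arrival_rank_less: "\<sigma> \<in> upto n \<Longrightarrow> a \<in> arrived \<sigma> \<Longrightarrow> arrival_rank \<sigma> a < n"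
  using bij_betw_apply[OF bij_betw_arrival_rank, of a \<sigma>] card_arrived_le[of \<sigma> n] by simp

lemma online_embedding_nlogn_distortion:
  assumes "is_metric d"
  shows "\<exists>E. online_monotone_embedding d UNIV E \<and>
    (\<forall>n\<ge>256. has_distortion d (upto n) E (32 * real n * ln (real n) * (ln (ln (real n)))\<^sup>2))"
proof -
  define w where "w \<sigma> x = rank_weight (arrival_rank \<sigma> x)" for \<sigma> :: "('a \<times> bool) list" and x
  define F where "F \<sigma> a b = 2 * max (w \<sigma> a) (w \<sigma> b) * d a b" for \<sigma> a b
  have "online_monotone_embedding d UNIV (minimax_embedding F)"
  proof (rule minimax_embedding_online_monotone)
    show "F \<sigma> a b = F \<sigma> b a" for \<sigma> a b
      unfolding F_def using is_metricD(2)[OF assms] by (simp add: max.commute)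
    show "F \<sigma> a b > 0" if "a \<noteq> b" for \<sigma> a b
      unfolding F_def w_def using is_metricD(5)[OF assms that] rank_weight_pos by (simp add: max_def)
    show "F \<sigma> a b = F (butlast \<sigma>) a b"
      if "a \<in> arrived (butlast \<sigma>)" "b \<in> arrived (butlast \<sigma>)" for \<sigma> a b
      unfolding F_def w_def using arrival_rank_butlast[OF that(1)] arrival_rank_butlast[OF that(2)] by simp
    show "d u v \<le> minimax_embedding F \<sigma> u v" if "u \<in> arrived \<sigma>" "v \<in> arrived \<sigma>" for \<sigma> u v
      unfolding minimax_embedding_def
    proof (rule minimax_dist_weighted_ge[OF finite_arrived assms that])
      show "w \<sigma> x > 0" for x unfolding w_def by (rule rank_weight_pos)
      show "(\<Sum>x\<in>arrived \<sigma>. 1 / w \<sigma> x) \<le> 1"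
        unfolding w_def by (rule sum_inverse_rank_weight_arrived_le_1)
      show "2 * min (w \<sigma> a) (w \<sigma> b) * d a b \<le> F \<sigma> a b" for a b
        unfolding F_def using is_metricD(4)[OF assms, of a b] rank_weight_pos
        by (intro mult_right_mono) auto
    qed
  qed
  moreover have "has_distortion d (upto n) (minimax_embedding F)
      (32 * real n * ln (real n) * (ln (ln (real n)))\<^sup>2)" if "n \<ge> 256" for n
  proof (rule minimax_embedding_distortion[OF assms])
    fix \<sigma> :: "('a \<times> bool) list" and a b assume "\<sigma> \<in> upto n" "a \<in> arrived \<sigma>" "b \<in> arrived \<sigma>"
    then have "arrival_rank \<sigma> a < n" "arrival_rank \<sigma> b < n" by (simp_all add: arrival_rank_less)
    then have "2 * max (w \<sigma> a) (w \<sigma> b) \<le> 32 * real n * ln (real n) * (ln (ln (real n)))\<^sup>2"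
      unfolding w_def max_def using rank_weight_le \<open>n \<ge> 256\<close> by auto
    then show "F \<sigma> a b \<le> 32 * real n * ln (real n) * (ln (ln (real n)))\<^sup>2 * d a b"
      unfolding F_def using is_metricD(4)[OF assms] by (intro mult_right_mono) auto
  qed
  ultimately show ?thesis by blast
qed

section \<open>The lower bound \<open>\<Omega>(n log n)\<close> without knowing \<open>n\<close>\<close>

lemma sum_inverse_nlogn_unbounded:
  assumes "T \<ge> (2::nat)"
  shows "\<exists>K. (\<Sum>i<K. 1 / (real (T + i) * ln (real (T + i)))) > 1"
proof -
  define c where "c = ln (ln (real T)) + 2"
  define K where "K = nat \<lceil>exp (exp c)\<rceil>"
  have K: "real (T + K) \<ge> exp (exp c)" unfolding K_def by linarith
  moreover have "real (T + K) > 0" using K exp_gt_zero[of "exp c"] by linarith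
  ultimately have "ln (real (T + K)) \<ge> exp c" by (subst ln_ge_iff) auto
  moreover have "ln (real (T + K)) > 0" using calculation exp_gt_zero[of c] by linarith
  ultimately have "ln (ln (real (T + K))) \<ge> c" by (subst ln_ge_iff) auto
  have step: "ln (ln (real (T + Suc i))) - ln (ln (real (T + i))) \<le> 1 / (real (T + i) * ln (real (T + i)))"
    for i
  proof -
    define m where "m = real (T + i)"
    have "m \<ge> 2" using assms unfolding m_def by simp
    then have "ln m > 0" "ln (m + 1) > 0" by simp_all
    then have "ln (ln (m + 1)) - ln (ln m) \<le> (ln (m + 1) - ln m) / ln m"
      using ln_diff_bounds(2) by blast
    also have "\<dots> \<le> (1 / m) / ln m"
      using ln_diff_bounds(2)[of "m + 1" m] \<open>m \<ge> 2\<close> \<open>ln m > 0\<close> by (intro divide_right_mono) auto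
    finally show ?thesis unfolding m_def by (simp add: add.commute)
  qed
  have "c - ln (ln (real T)) \<le> ln (ln (real (T + K))) - ln (ln (real (T + 0)))"
    using \<open>ln (ln (real (T + K))) \<ge> c\<close> by simp
  also have "\<dots> = (\<Sum>i<K. ln (ln (real (T + Suc i))) - ln (ln (real (T + i))))"
    by (rule sum_lessThan_telescope[symmetric])
  also have "\<dots> \<le> (\<Sum>i<K. 1 / (real (T + i) * ln (real (T + i))))"
    by (intro sum_mono step)
  finally have "(\<Sum>i<K. 1 / (real (T + i) * ln (real (T + i)))) \<ge> 2" unfolding c_def by simp
  then show ?thesis by (intro exI[of _ K]) simp
qed

lemma no_online_embedding_nlogn:
  fixes E :: "(real \<times> bool) list \<Rightarrow> real \<Rightarrow> real \<Rightarrow> real"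
  assumes E: "online_monotone_embedding dist UNIV E"
  shows "\<exists>n\<ge>N0. n \<ge> 3 \<and> \<not> has_distortion dist (upto n) E (real n * ln (real n))"
proof (rule ccontr)
  assume "\<not> ?thesis"
  then have distortion: "has_distortion dist (upto n) E (real n * ln (real n))"
    if "n \<ge> N0" "n \<ge> 3" for n
    using that by blast
  define T where "T = N0 + 3"
  define D where "D i = real (T + i) * ln (real (T + i))" for i
  obtain K where "(\<Sum>i<K. 1 / D i) > 1" using sum_inverse_nlogn_unbounded[of T] unfolding D_def T_def by auto
  define s where "s = (\<Sum>i<K. 1 / D i)"
  have "s > 1" "K > 0" using \<open>(\<Sum>i<K. 1 / D i) > 1\<close> unfolding s_def by (auto intro: Nat.gr0I)
  have D: "D i > 0" for i unfolding D_def T_def by simp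
  define y where "y j = (\<Sum>i<j. 1 / (D i * s))" for j
  have "dist (y 0) (y K) \<le> 1 / s"
  proof (rule online_monotone_embedding_arrival_chain[OF E _ _ \<open>K > 0\<close>])
    show "E (arrivals (map y [0..<Suc (Suc i)])) (y i) (y (Suc i)) \<le> 1 / s" if "i < K" for i
    proof -
      have "arrivals (map y [0..<Suc (Suc i)]) \<in> upto (T + i)" unfolding T_def by (simp add: arrivals_in_upto)
      moreover have "y i \<in> alive (arrivals (map y [0..<Suc (Suc i)]))"
        "y (Suc i) \<in> alive (arrivals (map y [0..<Suc (Suc i)]))"
        by (auto simp: alive_arrivals)
      ultimately have "E (arrivals (map y [0..<Suc (Suc i)])) (y i) (y (Suc i)) \<le> D i * dist (y i) (y (Suc i))"
        using distortion[of "T + i"] unfolding has_distortion_def D_def T_def by simp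
      also have "\<dots> = 1 / s" unfolding y_def dist_real_def using D[of i] \<open>s > 1\<close> by simp
      finally show ?thesis .
    qed
  qed simp
  moreover have "y K = (\<Sum>i<K. 1 / D i) / s" unfolding y_def by (simp add: sum_divide_distrib)
  then have "y K = 1" using \<open>s > 1\<close> unfolding s_def by simp
  ultimately show False using \<open>s > 1\<close> unfolding y_def dist_real_def by simp
qed

theorem mainTheorem2:
  shows
   "(\<forall>(n::nat) (d::'a \<Rightarrow> 'a \<Rightarrow> real). is_metric d \<longrightarrow>
       (\<exists>E. online_monotone_embedding d (upto n) E \<and>
            has_distortion d (upto n) E (real n - 1)))
  \<and> (\<forall>(n::nat) (lam::real). n \<ge> 2 \<longrightarrow> lam < real n - 1 \<longrightarrow>
       (\<exists>d::real \<Rightarrow> real \<Rightarrow> real. is_metric d \<and>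
          (\<forall>E. online_monotone_embedding d (upto n) E \<longrightarrow>
               \<not> has_distortion d (upto n) E lam)))
  \<and> (\<exists>(c::real) (k::nat) (N0::nat). c > 0 \<and>
       (\<forall>d::'a \<Rightarrow> 'a \<Rightarrow> real. is_metric d \<longrightarrow>
          (\<exists>E. online_monotone_embedding d UNIV E \<and>
               (\<forall>n\<ge>N0. has_distortion d (upto n) E
                   (c * real n * ln (real n) * (ln (ln (real n))) ^ k)))))
  \<and> (\<exists>(c::real) (k::nat). c > 0 \<and>
       (\<exists>d::real \<Rightarrow> real \<Rightarrow> real. is_metric d \<and>
          (\<forall>E. online_monotone_embedding d UNIV E \<longrightarrow>
               (\<forall>N0::nat. \<exists>n. n \<ge> N0 \<and> n \<ge> 3 \<and>
                  \<not> has_distortion d (upto n) E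
                      (real n * ln (real n) / (c * (ln (ln (real n))) ^ k))))))"
  apply (intro conjI allI impI)
  subgoal by (rule online_embedding_upto_distortion)
  subgoal using is_metric_dist no_online_embedding_upto_below by blast
  subgoal using online_embedding_nlogn_distortion by (intro exI[of _ 32] exI[of _ 2] exI[of _ 256]) auto
  subgoal using is_metric_dist no_online_embedding_nlogn by (intro exI[of _ 1] exI[of _ 0] exI[of _ dist]) auto
  done

end
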